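(* Let $p_*=(p_1\ge p_2\ge\dots\ge p_\sigma)\in\mathcal P_n$, let $V_*,V'_*\in\mathcal F$ with $a_{V_*,V'_*}=w_{p_*}$, and let $g\in Is(V)$ with $gV_*=V'_*$. Then there exist vectors $v_1,\dots,v_\sigma\in V$, each unique up to multiplication by $\pm1$, such that, setting $Z_k=S(v_k,gv_k,\dots,g^{p_k-1}v_k)$ for $k\in[1,\sigma]$, for every $r\in[1,\sigma]$: (i) $V_{p_{<r}+i}=Z_1+\dots+Z_{r-1}+S(v_r,gv_r,\dots,g^{i-1}v_r)$ for $i\in[0,p_r]$; (ii) $(g^iv_t,v_r)=0$ for all $1\le t<r$ and $i\in[-p_t,p_t-1]$; (iii) $(v_r,g^iv_r)=0$ for $i\in[-p_r+1,p_r-1]$, $Q(v_r)=0$, and $(v_r,g^{p_r}v_r)=1$; (iv) the vectors $g^{-p_t+i}v_t$ ($t\in[1,r]$, $i\in[0,2p_t-1]$) are linearly independent; (v) setting $E_r=S(g^{-p_t+i}v_t;\ t\in[1,r],\ i\in[0,p_t-1])$, one has $V=V_{p_{\le r}}\oplus E_r^\perp$. If $\kappa=1$, there exists moreover a vector $v_{\sigma+1}\in V$ (unique up to $\pm1$) such that $(g^iv_t,v_{\sigma+1})=0$ for all $t\in[1,\sigma]$, $i\in[-p_t,p_t-1]$, and $Q(v_{\sigma+1})=1$. Finally: (vi) if $\kappa=0$, the vectors $g^jv_t$ ($t\in[1,\sigma]$, $j\in[-p_t,p_t-1]$) form a basis of $V$; if $\kappa=1$, these vectors together with $v_{\sigma+1}$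 form a basis of $V$.
   Context: Let $\mathbf k$ be an algebraically closed field of characteristic $p$. Let $V$ be a $\mathbf k$-vector space of dimension $\mathfrak n\ge3$, $\kappa\in\{0,1\}$ with $\kappa\equiv\mathfrak n\pmod 2$, and $n=(\mathfrak n-\kappa)/2$. $V$ carries a bilinear form $(\,,)$ and a quadratic form $Q$ such that either (i) $Q=0$, $(x,x)=0$ for all $x$, and $V^\perp=0$; or (ii) $Q\ne0$, $(x,y)=Q(x+y)-Q(x)-Q(y)$, and $Q|_{V^\perp}$ is injective. Here $V'^\perp=\{x:(x,V')=0\}$. $Is(V)$ is the group of $g\in GL(V)$ with $(gx,gy)=(x,y)$ and $Q(gx)=Q(x)$. $\mathcal F$ is the set of sequences $V_*=(0=V_0\subset V_1\subset\dots\subset V_{\mathfrak n}=V)$ with $\dim V_i=i$, such that $Q|_{V_i}=0$ and $V_i^\perp=V_{\mathfrak n-i}$ for all $i\in[0,n]$. For $V_*,V'_*\in\mathcal F$ define the permutation $a_{V_*,V'_*}:i\mapsto a_i$ of $[1,\mathfrak n]$: for $i\in[0,\mathfrak n]$ let $X_i=\{j\in[1,\mathfrak n]: V'_i\cap V_j\neq V'_i\cap V_{j-1}\}$; then $\emptyset=X_0\subset X_1\subset\dots\subset X_{\mathfrak n}=[1,\mathfrak n]$ and $X_i=X_{i-1}\sqcup\{a_i\}$. $\mathcal P_n$ is the set of sequences $p_1\ge\dots\ge p_\sigma$ of integers $\ge1$ with sum $n$; for such $p_*$ set $p_{<r}=\sum_{r'<r}p_{r'}$, $p_{\le r}=\sum_{r'\le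 r}p_{r'}$. $w_{p_*}$ is the permutation of $[1,\mathfrak n]$ which, for each $r\in[1,\sigma]$, has the cycle $p_{<r}+1\mapsto p_{<r}+2\mapsto\dots\mapsto p_{\le r}\mapsto \mathfrak n-p_{<r}\mapsto\mathfrak n-p_{<r}-1\mapsto\dots\mapsto\mathfrak n-p_{\le r}+1\mapsto p_{<r}+1$, and (if $\kappa=1$) fixes $n+1$. For vectors $v_1,\dots,v_s$, $S(v_1,\dots,v_s)$ denotes their span. $[a,b]=\{c\in\mathbb Z:a\le c\le b\}$. *)

theory Defs
  imports Complex_Main "HOL-Computational_Algebra.Polynomial"
begin

definition alg_closed :: "'a::field itself \<Rightarrow> bool" where
  "alg_closed _ \<longleftrightarrow> (\<forall>f::'a poly. 0 < degree f \<longrightarrow> (\<exists>x. poly f x = 0))"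

definition bilinear_form :: "('a::field \<Rightarrow> 'v::ab_group_add \<Rightarrow> 'v) \<Rightarrow> ('v \<Rightarrow> 'v \<Rightarrow> 'a) \<Rightarrow> bool" where
  "bilinear_form scale B \<longleftrightarrow>
     (\<forall>x y z. B (x + y) z = B x z + B y z) \<and> (\<forall>x y z. B x (y + z) = B x y + B x z) \<and>
     (\<forall>c x y. B (scale c x) y = c * B x y) \<and> (\<forall>c x y. B x (scale c y) = c * B x y)"

definition perp :: "('v \<Rightarrow> 'v \<Rightarrow> 'a::zero) \<Rightarrow> 'v set \<Rightarrow> 'v set" where
  "perp B W = {x. \<forall>y\<in>W. B x y = 0}"

(* standing assumptions: (i) Q = 0, alternating, nondegenerate; or
   (ii) Q a nonzero quadratic form with polar form B, Q injective on V^perp *)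
definition form_setting :: "('a::field \<Rightarrow> 'v::ab_group_add \<Rightarrow> 'v) \<Rightarrow> ('v \<Rightarrow> 'v \<Rightarrow> 'a) \<Rightarrow> ('v \<Rightarrow> 'a) \<Rightarrow> bool" where
  "form_setting scale B Q \<longleftrightarrow> bilinear_form scale B \<and>
     ((Q = (\<lambda>_. 0) \<and> (\<forall>x. B x x = 0) \<and> perp B UNIV = {0}) \<or>
      (Q \<noteq> (\<lambda>_. 0) \<and> (\<forall>c x. Q (scale c x) = c * c * Q x) \<and>
       (\<forall>x y. B x y = Q (x + y) - Q x - Q y) \<and> inj_on Q (perp B UNIV)))"

definition isometry :: "('a::field \<Rightarrow> 'v::ab_group_add \<Rightarrow> 'v) \<Rightarrow> ('v \<Rightarrow> 'v \<Rightarrow> 'a) \<Rightarrow> ('v \<Rightarrow> 'a) \<Rightarrow> ('v \<Rightarrow> 'v) \<Rightarrow> bool" where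
  "isometry scale B Q g \<longleftrightarrow> Vector_Spaces.linear scale scale g \<and> bij g \<and>
     (\<forall>x y. B (g x) (g y) = B x y) \<and> (\<forall>x. Q (g x) = Q x)"

(* the set F of isotropic flags, indexed by i in [0,N], N = dim V, n = N div 2 *)
definition isoflag :: "('a::field \<Rightarrow> 'v::ab_group_add \<Rightarrow> 'v) \<Rightarrow> ('v \<Rightarrow> 'v \<Rightarrow> 'a) \<Rightarrow> ('v \<Rightarrow> 'a) \<Rightarrow> nat \<Rightarrow> (nat \<Rightarrow> 'v set) \<Rightarrow> bool" where
  "isoflag scale B Q N W \<longleftrightarrow>
     (\<forall>i\<le>N. module.subspace scale (W i) \<and> vector_space.dim scale (W i) = i) \<and>
     (\<forall>i\<in>{1..N}. W (i - 1) \<subseteq> W i) \<and> W 0 = {0} \<and> W N = UNIV \<and>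
     (\<forall>i\<le>N div 2. (\<forall>x\<in>W i. Q x = 0) \<and> perp B (W i) = W (N - i))"

definition relX :: "nat \<Rightarrow> (nat \<Rightarrow> 'v set) \<Rightarrow> (nat \<Rightarrow> 'v set) \<Rightarrow> nat \<Rightarrow> nat set" where
  "relX N W W' i = {j\<in>{1..N}. W' i \<inter> W j \<noteq> W' i \<inter> W (j - 1)}"

definition relpos :: "nat \<Rightarrow> (nat \<Rightarrow> 'v set) \<Rightarrow> (nat \<Rightarrow> 'v set) \<Rightarrow> nat \<Rightarrow> nat" where
  "relpos N W W' i = (THE j. j \<in> relX N W W' i \<and> j \<notin> relX N W W' (i - 1))"

(* partitions p_1 \<ge> ... \<ge> p_sigma as lists; p_r = p ! (r - 1) *)
definition partition_of :: "nat list \<Rightarrow> nat \<Rightarrow> bool" where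
  "partition_of p n \<longleftrightarrow> sorted_wrt (\<ge>) p \<and> (\<forall>x\<in>set p. 1 \<le> x) \<and> sum_list p = n"

definition plt :: "nat list \<Rightarrow> nat \<Rightarrow> nat" where
  "plt p r = sum_list (take (r - 1) p)"

definition ple :: "nat list \<Rightarrow> nat \<Rightarrow> nat" where
  "ple p r = sum_list (take r p)"

definition wblock :: "nat list \<Rightarrow> nat \<Rightarrow> nat \<Rightarrow> nat set" where
  "wblock p N r = {plt p r <.. ple p r} \<union> {N - ple p r <.. N - plt p r}"

(* the r-th cycle p_{<r}+1 \<mapsto> ... \<mapsto> p_{\<le>r} \<mapsto> N-p_{<r} \<mapsto> ... \<mapsto> N-p_{\<le>r}+1 \<mapsto> p_{<r}+1 *)
definition wcyc :: "nat list \<Rightarrow> nat \<Rightarrow> nat \<Rightarrow> nat \<Rightarrow> nat" where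
  "wcyc p N r i =
     (if plt p r < i \<and> i < ple p r then i + 1
      else if i = ple p r then N - plt p r
      else if N - ple p r + 1 < i \<and> i \<le> N - plt p r then i - 1
      else if i = N - ple p r + 1 then plt p r + 1
      else i)"

definition wperm :: "nat list \<Rightarrow> nat \<Rightarrow> nat \<Rightarrow> nat" where
  "wperm p N i =
     (if \<exists>r\<in>{1..length p}. i \<in> wblock p N r
      then wcyc p N (THE r. r \<in> {1..length p} \<and> i \<in> wblock p N r) i
      else i)"

definition gpow :: "('v \<Rightarrow> 'v) \<Rightarrow> int \<Rightarrow> 'v \<Rightarrow> 'v" where
  "gpow g i = (if 0 \<le> i then g ^^ nat i else (inv g) ^^ nat (- i))"

definition indep_family :: "('a::field \<Rightarrow> 'v::ab_group_add \<Rightarrow> 'v) \<Rightarrow> ('i \<Rightarrow> 'v) \<Rightarrow> 'i set \<Rightarrow> bool" where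
  "indep_family scale f I \<longleftrightarrow> inj_on f I \<and> \<not> module.dependent scale (f ` I)"

definition basis_family :: "('a::field \<Rightarrow> 'v::ab_group_add \<Rightarrow> 'v) \<Rightarrow> ('i \<Rightarrow> 'v) \<Rightarrow> 'i set \<Rightarrow> bool" where
  "basis_family scale f I \<longleftrightarrow> indep_family scale f I \<and> module.span scale (f ` I) = UNIV"

definition direct_sum_UNIV :: "'v::ab_group_add set \<Rightarrow> 'v set \<Rightarrow> bool" where
  "direct_sum_UNIV A C \<longleftrightarrow> A \<inter> C = {0} \<and> (\<forall>x. \<exists>a\<in>A. \<exists>c\<in>C. x = a + c)"

definition props_i_v :: "('a::field \<Rightarrow> 'v::ab_group_add \<Rightarrow> 'v) \<Rightarrow> ('v \<Rightarrow> 'v \<Rightarrow> 'a) \<Rightarrow> ('v \<Rightarrow> 'a)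
    \<Rightarrow> ('v \<Rightarrow> 'v) \<Rightarrow> (nat \<Rightarrow> 'v set) \<Rightarrow> nat list \<Rightarrow> (nat \<Rightarrow> 'v) \<Rightarrow> bool" where
  "props_i_v scale B Q g W p v \<longleftrightarrow>
    (\<forall>r\<in>{1..length p}.
      \<comment> \<open>(i): Z_k = S(v_k, g v_k, ..., g^{p_k-1} v_k)\<close>
      (\<forall>i\<le>p ! (r - 1).
         W (plt p r + i) =
           module.span scale ((\<Union>t\<in>{1..<r}. module.span scale ((\<lambda>j. gpow g (int j) (v t)) ` {..<p ! (t - 1)}))
                              \<union> (\<lambda>j. gpow g (int j) (v r)) ` {..<i})) \<and>
      \<comment> \<open>(ii)\<close>
      (\<forall>t\<in>{1..<r}. \<forall>i\<in>{- int (p ! (t - 1)) .. int (p ! (t - 1)) - 1}. B (gpow g i (v t)) (v r) = 0) \<and>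
      \<comment> \<open>(iii)\<close>
      (\<forall>i\<in>{- int (p ! (r - 1)) + 1 .. int (p ! (r - 1)) - 1}. B (v r) (gpow g i (v r)) = 0) \<and>
      Q (v r) = 0 \<and> B (v r) (gpow g (int (p ! (r - 1))) (v r)) = 1 \<and>
      \<comment> \<open>(iv)\<close>
      indep_family scale (\<lambda>(t, i). gpow g (- int (p ! (t - 1)) + int i) (v t))
        (SIGMA t:{1..r}. {..<2 * p ! (t - 1)}) \<and>
      \<comment> \<open>(v)\<close>
      direct_sum_UNIV (W (ple p r))
        (perp B (module.span scale ((\<lambda>(t, i). gpow g (- int (p ! (t - 1)) + int i) (v t))
                                      ` (SIGMA t:{1..r}. {..<p ! (t - 1)})))))"

definition props_last :: "('v \<Rightarrow> 'v \<Rightarrow> 'a::field) \<Rightarrow> ('v \<Rightarrow> 'a) \<Rightarrow> ('v \<Rightarrow> 'v) \<Rightarrow> nat list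
    \<Rightarrow> (nat \<Rightarrow> 'v) \<Rightarrow> 'v \<Rightarrow> bool" where
  "props_last B Q g p v u \<longleftrightarrow>
     (\<forall>t\<in>{1..length p}. \<forall>i\<in>{- int (p ! (t - 1)) .. int (p ! (t - 1)) - 1}. B (gpow g i (v t)) u = 0) \<and>
     Q u = 1"

definition full_family :: "('v \<Rightarrow> 'v) \<Rightarrow> nat list \<Rightarrow> (nat \<Rightarrow> 'v) \<Rightarrow> nat \<times> int \<Rightarrow> 'v" where
  "full_family g p v = (\<lambda>(t, j). gpow g j (v t))"

definition full_index :: "nat list \<Rightarrow> (nat \<times> int) set" where
  "full_index p = (SIGMA t:{1..length p}. {- int (p ! (t - 1)) .. int (p ! (t - 1)) - 1})"

end

theory Submission
  imports Defs
begin

(* The vectors v_1, ..., v_sigma are constructed one at a time. Suppose v_1, ..., v_{r-1}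
   satisfy (i)-(v) and put s = p_{<r}. Then V_s is spanned by the g^j v_t (t < r, j < p_t)
   and V = V_s \<oplus> E_{r-1}^\<perp>, so V_{s+1} contains a vector x outside V_s that is orthogonal
   to all g^i v_t (t < r, -p_t \<le> i < p_t). Since w_p sends s+k to s+k+1 for 1 \<le> k < p_r,
   g maps V_{s+k} into V_{s+k+1}, and a triangularity argument gives
   V_{s+k} = V_s + S(x, ..., g^{k-1} x); since w_p sends p_{\<le>r} to N - p_{<r}, the pairing
   (x, g^{p_r} x) is nonzero, and rescaling by a square root (k is algebraically closed)
   normalises it to 1. Properties (iv) and (v) then follow from a triangular pairing
   lemma: the pairing between the g^j v_t and the g^{-p_t+i} v_t is triangular with nonzero
   diagonal for a suitable ranking. Uniqueness up to sign is proved by induction with the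
   same decomposition. For odd N the orthogonal of all g^j v_t is a line on which Q does
   not vanish, which yields v_{sigma+1}; counting dimensions gives the bases of (vi). *)

lemma (in vector_space) finite_basis_from_span:
  assumes "finite S" "span S = UNIV"
  obtains Basis where "finite_dimensional_vector_space scale Basis"
proof -
  obtain b where b: "b \<subseteq> S" "independent b" "S \<subseteq> span b"
    using maximal_independent_subset[of S] by blast
  have "finite b" using b assms finite_subset by blast
  moreover have "span b = UNIV" using b assms
    by (metis span_eq_iff span_mono span_span subspace_span top.extremum_uniqueI)
  ultimately have "finite_dimensional_vector_space scale b"
    using b by unfold_locales
  then show ?thesis by (rule that)
qed

lemma (in vector_space) span_image_sum:
  assumes "finite I" "x \<in> span (h ` I)"
  shows "\<exists>c. x = (\<Sum>j\<in>I. c j *s h j)"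
  using assms
proof (induction I arbitrary: x rule: finite_induct)
  case empty thus ?case by simp
next
  case (insert a I)
  have "x \<in> span (insert (h a) (h ` I))" using insert.prems by simp
  then obtain k where k: "x - k *s h a \<in> span (h ` I)" using span_breakdown_eq by blast
  obtain c where c: "x - k *s h a = (\<Sum>j\<in>I. c j *s h j)" using insert.IH[OF k] by blast
  have "(\<Sum>j\<in>insert a I. (c(a := k)) j *s h j) = k *s h a + (\<Sum>j\<in>I. c j *s h j)"
    using insert.hyps by (simp add: sum.insert_if) (rule sum.cong, auto)
  also have "\<dots> = x" using c by (simp add: algebra_simps)
  finally show ?case by metis
qed

(* In an algebraically closed field every K \<noteq> 0 has the form 1 / m^2; used to normalise
   B(v_r, g^{p_r} v_r) and Q(v_{\<sigma>+1}) to 1. *)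
lemma alg_closed_inverse_square:
  assumes "alg_closed TYPE('a::field)" and K: "(K::'a) \<noteq> 0"
  shows "\<exists>m. m * m * K = 1"
proof -
  let ?f = "[:- inverse K, 0, 1:] :: 'a poly"
  have "degree ?f = 2" by simp
  then obtain m where "poly ?f m = 0" using assms(1) unfolding alg_closed_def
    by (metis zero_less_numeral)
  hence "m * m = inverse K" by (simp add: algebra_simps)
  hence "m * m * K = 1" using K by simp
  thus ?thesis by blast
qed

lemma square_eq_square_iff:
  fixes c m :: "'a::field"
  assumes "c * c = m * m"
  shows "c = m \<or> c = - m"
proof -
  have "(c - m) * (c + m) = 0" using assms by (simp add: algebra_simps)
  thus ?thesis by (auto simp: add_eq_0_iff2)
qed

locale bilinear_space = finite_dimensional_vector_space scale Basis
  for scale :: "'a::field \<Rightarrow> 'v::ab_group_add \<Rightarrow> 'v" (infixr \<open>*s\<close> 75)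
    and Basis :: "'v set" +
  fixes B :: "'v \<Rightarrow> 'v \<Rightarrow> 'a"
  assumes bilinear: "bilinear_form scale B"
begin

lemma B_add1: "B (x + y) z = B x z + B y z"
  using bilinear unfolding bilinear_form_def by blast
lemma B_add2: "B x (y + z) = B x y + B x z"
  using bilinear unfolding bilinear_form_def by blast
lemma B_scale1: "B (c *s x) y = c * B x y"
  using bilinear unfolding bilinear_form_def by blast
lemma B_scale2: "B x (c *s y) = c * B x y"
  using bilinear unfolding bilinear_form_def by blast
lemma B_zero1 [simp]: "B 0 y = 0"
  using B_scale1[of 0 0 y] by simp
lemma B_zero2 [simp]: "B x 0 = 0"
  using B_scale2[of x 0 0] by simp
lemma B_neg1: "B (- x) y = - B x y"
  using B_add1[of x "- x" y] by (simp add: eq_neg_iff_add_eq_0 add.commute)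
lemma B_neg2: "B x (- y) = - B x y"
  using B_add2[of x y "- y"] by (simp add: eq_neg_iff_add_eq_0 add.commute)
lemma B_diff1: "B (x - y) z = B x z - B y z"
  using B_add1[of x "- y" z] B_neg1 by simp
lemma B_diff2: "B x (y - z) = B x y - B x z"
  using B_add2[of x y "- z"] B_neg2 by simp
lemma B_sum1: "B (\<Sum>i\<in>I. f i) x = (\<Sum>i\<in>I. B (f i) x)"
  by (induction I rule: infinite_finite_induct) (auto simp: B_add1)
lemma B_sum2: "B x (\<Sum>i\<in>I. f i) = (\<Sum>i\<in>I. B x (f i))"
  by (induction I rule: infinite_finite_induct) (auto simp: B_add2)

(* Then the only vector in
   the span of h that is orthogonal to every f i is 0 (take the nonzero coefficient of
   largest rank); dually for the span of f (take the smallest rank). These two facts give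
   independence and the direct sum decompositions (iv), (v) below. *)
lemma triangular_pairing_right:
  fixes f h :: "'i \<Rightarrow> 'v" and \<rho> :: "'i \<Rightarrow> nat"
  assumes I: "finite I" and inj: "inj_on \<rho> I"
    and diag: "\<And>i. i \<in> I \<Longrightarrow> B (f i) (h i) \<noteq> 0"
    and tri: "\<And>i j. i \<in> I \<Longrightarrow> j \<in> I \<Longrightarrow> \<rho> j < \<rho> i \<Longrightarrow> B (f i) (h j) = 0"
    and x: "x \<in> span (h ` I)" and orth: "\<And>i. i \<in> I \<Longrightarrow> B (f i) x = 0"
  shows "x = 0"
proof -
  obtain c where c: "x = (\<Sum>j\<in>I. c j *s h j)" using span_image_sum[OF I x] by blast
  have "\<forall>j\<in>I. c j = 0"
  proof (rule ccontr)
    let ?J = "{j\<in>I. c j \<noteq> 0}"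
    assume "\<not> (\<forall>j\<in>I. c j = 0)"
    hence "?J \<noteq> {}" "finite ?J" using I by auto
    then obtain i where i: "i \<in> ?J" "\<rho> i = Max (\<rho> ` ?J)"
      by (metis (no_types, lifting) Max_in finite_imageI image_is_empty imageE)
    have others: "c j * B (f i) (h j) = 0" if j: "j \<in> I - {i}" for j
    proof (cases "c j = 0")
      case False
      hence "\<rho> j \<le> \<rho> i" using i(2) j I by simp
      moreover have "\<rho> j \<noteq> \<rho> i" using inj j i(1) unfolding inj_on_def by blast
      ultimately show ?thesis using tri[of i j] j i(1) by simp
    qed simp
    have "B (f i) x = (\<Sum>j\<in>I. c j * B (f i) (h j))" unfolding c by (simp add: B_sum2 B_scale2)
    also have "\<dots> = c i * B (f i) (h i) + (\<Sum>j\<in>I - {i}. c j * B (f i) (h j))"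
      using i(1) I by (intro sum.remove) auto
    also have "\<dots> = c i * B (f i) (h i)" using others by (simp add: sum.neutral)
    finally show False using orth i(1) diag by simp
  qed
  thus ?thesis unfolding c by simp
qed

lemma triangular_pairing_left:
  fixes f h :: "'i \<Rightarrow> 'v" and \<rho> :: "'i \<Rightarrow> nat"
  assumes I: "finite I" and inj: "inj_on \<rho> I"
    and diag: "\<And>i. i \<in> I \<Longrightarrow> B (f i) (h i) \<noteq> 0"
    and tri: "\<And>i j. i \<in> I \<Longrightarrow> j \<in> I \<Longrightarrow> \<rho> j < \<rho> i \<Longrightarrow> B (f i) (h j) = 0"
    and x: "x \<in> span (f ` I)" and orth: "\<And>j. j \<in> I \<Longrightarrow> B x (h j) = 0"
  shows "x = 0"
proof -
  obtain c where c: "x = (\<Sum>j\<in>I. c j *s f j)" using span_image_sum[OF I x] by blast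
  have "\<forall>j\<in>I. c j = 0"
  proof (rule ccontr)
    let ?J = "{j\<in>I. c j \<noteq> 0}"
    assume "\<not> (\<forall>j\<in>I. c j = 0)"
    hence "?J \<noteq> {}" "finite ?J" using I by auto
    then obtain i where i: "i \<in> ?J" "\<rho> i = Min (\<rho> ` ?J)"
      by (metis (no_types, lifting) Min_in finite_imageI image_is_empty imageE)
    have others: "c j * B (f j) (h i) = 0" if j: "j \<in> I - {i}" for j
    proof (cases "c j = 0")
      case False
      hence "\<rho> i \<le> \<rho> j" using i(2) j I by simp
      moreover have "\<rho> j \<noteq> \<rho> i" using inj j i(1) unfolding inj_on_def by blast
      ultimately show ?thesis using tri[of j i] j i(1) by simp
    qed simp
    have "B x (h i) = (\<Sum>j\<in>I. c j * B (f j) (h i))" unfolding c by (simp add: B_sum1 B_scale1)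
    also have "\<dots> = c i * B (f i) (h i) + (\<Sum>j\<in>I - {i}. c j * B (f j) (h i))"
      using i(1) I by (intro sum.remove) auto
    also have "\<dots> = c i * B (f i) (h i)" using others by (simp add: sum.neutral)
    finally show False using orth i(1) diag by simp
  qed
  thus ?thesis unfolding c by simp
qed

lemma perp_subspace: "subspace (perp B S)"
  unfolding subspace_def perp_def by (auto simp: B_add1 B_scale1)

lemma perp_antimono: "S \<subseteq> T \<Longrightarrow> perp B T \<subseteq> perp B S"
  unfolding perp_def by auto

lemma perp_span [simp]: "perp B (span S) = perp B S"
proof
  show "perp B (span S) \<subseteq> perp B S" using perp_antimono[OF span_superset] .
  show "perp B S \<subseteq> perp B (span S)"
  proof
    fix x assume x: "x \<in> perp B S"
    have "subspace {y. B x y = 0}" unfolding subspace_def by (auto simp: B_add2 B_scale2)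
    moreover have "S \<subseteq> {y. B x y = 0}" using x unfolding perp_def by auto
    ultimately have "span S \<subseteq> {y. B x y = 0}" by (rule span_minimal[rotated])
    thus "x \<in> perp B (span S)" unfolding perp_def by auto
  qed
qed

lemma dim_hyperplane_section:
  assumes U: "subspace U"
  shows "dim U \<le> dim (U \<inter> {x. B x a = 0}) + 1"
proof (cases "U \<subseteq> {x. B x a = 0}")
  case True thus ?thesis by (simp add: Int_absorb2)
next
  case False
  then obtain e where e: "e \<in> U" "B e a \<noteq> 0" by auto
  have "U \<subseteq> span (insert e (U \<inter> {x. B x a = 0}))"
  proof
    fix x assume x: "x \<in> U"
    let ?c = "B x a / B e a"
    have "x - ?c *s e \<in> U" using x e U by (simp add: subspace_diff subspace_scale)
    moreover have "B (x - ?c *s e) a = 0" using e by (simp add: B_diff1 B_scale1)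
    ultimately have "x - ?c *s e \<in> span (U \<inter> {x. B x a = 0})" by (simp add: span_base)
    thus "x \<in> span (insert e (U \<inter> {x. B x a = 0}))" using span_breakdown_eq by blast
  qed
  hence "dim U \<le> dim (insert e (U \<inter> {x. B x a = 0}))" by (rule dim_mono)
  also have "\<dots> \<le> dim (U \<inter> {x. B x a = 0}) + 1" by (simp add: dim_insert)
  finally show ?thesis .
qed

(* Each vector of T imposes one linear condition, so V = T^\<perp> has codimension \<le> |T|. *)
lemma perp_card: "finite T \<Longrightarrow> dimension \<le> dim (perp B T) + card T"
proof (induction T rule: finite_induct)
  case empty
  have "perp B {} = UNIV" unfolding perp_def by auto
  thus ?case by (simp add: dimension_def)
next
  case (insert a T)
  have e: "perp B (insert a T) = perp B T \<inter> {x. B x a = 0}" unfolding perp_def by auto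
  have "dim (perp B T) \<le> dim (perp B (insert a T)) + 1"
    unfolding e by (rule dim_hyperplane_section[OF perp_subspace])
  thus ?case using insert by simp
qed

lemma perp_dim: "dimension \<le> dim (perp B S) + dim S"
proof -
  obtain T where T: "T \<subseteq> span S" "independent T" "span S \<subseteq> span T" "card T = dim (span S)"
    using basis_exists[of "span S"] by blast
  have "span T = span S" using T by (metis span_eq span_span)
  hence "perp B T = perp B S" by (metis perp_span)
  thus ?thesis using perp_card[OF finiteI_independent[OF T(2)]] T(4) by simp
qed

lemma dim_sum_disjoint:
  assumes "subspace U" "subspace V" "U \<inter> V = {0}"
  shows "dim {x + y |x y. x \<in> U \<and> y \<in> V} = dim U + dim V"
  using dim_sums_Int[OF assms(1,2)] assms(3) by simp

lemma direct_sum_by_dim: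
  assumes U: "subspace U" and V: "subspace V" and I: "U \<inter> V = {0}"
    and d: "dimension \<le> dim U + dim V"
  shows "direct_sum_UNIV U V"
proof -
  let ?S = "{x + y |x y. x \<in> U \<and> y \<in> V}"
  have "dim ?S = dimension" using dim_sum_disjoint[OF U V I] d dim_subset_UNIV[of ?S] by simp
  hence "span ?S = UNIV" using dim_eq_full by simp
  moreover have "span ?S = ?S" using subspace_sums[OF U V] by (simp only: span_eq_iff)
  ultimately have "?S = UNIV" by simp
  thus ?thesis unfolding direct_sum_UNIV_def using I by blast
qed

end

locale isometry_space = bilinear_space scale Basis B
  for scale :: "'a::field \<Rightarrow> 'v::ab_group_add \<Rightarrow> 'v" (infixr \<open>*s\<close> 75)
    and Basis :: "'v set" and B :: "'v \<Rightarrow> 'v \<Rightarrow> 'a" +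
  fixes g :: "'v \<Rightarrow> 'v"
  assumes g_linear: "Vector_Spaces.linear scale scale g"
    and g_bij: "bij g"
    and g_preserves_B: "B (g x) (g y) = B x y"
begin

lemma g_inv_f [simp]: "g (inv g x) = x"
  using g_bij by (simp add: bij_is_surj surj_f_inv_f)
lemma inv_g_f [simp]: "inv g (g x) = x"
  using g_bij by (simp add: bij_is_inj inv_f_f)

lemma inv_g_linear: "Vector_Spaces.linear scale scale (inv g)"
proof -
  have "module_hom scale scale g" using g_linear by (simp add: module_hom_iff_linear)
  hence "module_hom scale scale (inv g)" using g_bij by (rule bij_module_hom_imp_inv_module_hom)
  thus ?thesis by (simp add: module_hom_iff_linear)
qed

lemma gpow_0 [simp]: "gpow g 0 x = x"
  by (simp add: gpow_def)

lemma gpow_succ: "gpow g (i + 1) x = g (gpow g i x)"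
proof (cases "0 \<le> i")
  case True
  hence "nat (i + 1) = Suc (nat i)" by simp
  thus ?thesis using True by (simp add: gpow_def)
next
  case False
  show ?thesis
  proof (cases "i = -1")
    case True thus ?thesis by (simp add: gpow_def)
  next
    case F2: False
    hence "nat (- i) = Suc (nat (- (i + 1)))" using False by simp
    thus ?thesis using False F2 by (simp add: gpow_def)
  qed
qed

lemma gpow_pred: "gpow g (i - 1) x = inv g (gpow g i x)"
  using gpow_succ[of "i - 1" x] by simp

lemma g_gpow_nat: "g (gpow g (int j) y) = gpow g (int (Suc j)) y"
  using gpow_succ[of "int j" y] by (simp add: add.commute)

lemma gpow_add: "gpow g (i + j) x = gpow g i (gpow g j x)"
proof (induction i rule: int_induct[where k=0])
  case base thus ?case by simp
next
  case (step1 i)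
  have "gpow g (i + 1 + j) x = gpow g ((i + j) + 1) x" by (simp add: ac_simps)
  thus ?case using step1 by (simp add: gpow_succ)
next
  case (step2 i)
  have "gpow g (i - 1 + j) x = gpow g ((i + j) - 1) x" by (simp add: algebra_simps)
  thus ?case using step2 by (simp add: gpow_pred)
qed

lemma gpow_inverse: "gpow g (- i) (gpow g i x) = x"
  using gpow_add[of "- i" i x] by simp

lemma gpow_linear: "Vector_Spaces.linear scale scale (gpow g i)"
proof -
  have iter: "Vector_Spaces.linear scale scale (f ^^ k)" if "Vector_Spaces.linear scale scale f" for f k
  proof (induction k)
    case 0 thus ?case using linear_id by (simp add: id_def)
  next
    case (Suc k) thus ?case using Vector_Spaces.linear_compose[OF Suc that] by (simp add: o_def)
  qed
  show ?thesis unfolding gpow_def using iter g_linear inv_g_linear by simp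
qed

lemma gpow_add_vec: "gpow g i (x + y) = gpow g i x + gpow g i y"
  using gpow_linear[of i] unfolding Vector_Spaces.linear_iff by blast
lemma gpow_scale: "gpow g i (c *s x) = c *s gpow g i x"
  using gpow_linear[of i] unfolding Vector_Spaces.linear_iff by blast
lemma gpow_neg: "gpow g i (- x) = - gpow g i x"
  using gpow_add_vec[of i x "- x"] gpow_scale[of i 0 0] by (simp add: eq_neg_iff_add_eq_0 add.commute)

lemma gpow_B: "B (gpow g i x) (gpow g i y) = B x y"
proof (induction i arbitrary: x y rule: int_induct[where k=0])
  case base thus ?case by simp
next
  case (step1 i) thus ?case by (simp add: gpow_succ g_preserves_B)
next
  case (step2 i)
  have "B (inv g u) (inv g w) = B u w" for u w using g_preserves_B[of "inv g u" "inv g w"] by simp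
  thus ?case using step2 by (simp add: gpow_pred)
qed

lemma gpow_B_shift: "B (gpow g i x) y = B x (gpow g (- i) y)"
  using gpow_B[of "- i" "gpow g i x" y] gpow_inverse by simp

lemma gpow_B_shift': "B x (gpow g i y) = B (gpow g (- i) x) y"
  using gpow_B_shift[of "- i" x y] by simp

lemma g_image_span: "g ` span S = span (g ` S)"
proof -
  interpret l: Vector_Spaces.linear scale scale g by (rule g_linear)
  show ?thesis by (simp add: l.span_image)
qed

end

(* The t-th part p_t of a partition stored as a list (parts are numbered from 1). *)
definition part_size :: "nat list \<Rightarrow> nat \<Rightarrow> nat" where
  "part_size p t = p ! (t - 1)"

lemma part_size_pos:
  assumes "partition_of p n" "1 \<le> t" "t \<le> length p"
  shows "1 \<le> part_size p t"
  using assms unfolding partition_of_def part_size_def by (simp add: nth_mem)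

lemma part_size_antimono:
  assumes "partition_of p n" "1 \<le> t'" "t' \<le> t" "t \<le> length p"
  shows "part_size p t \<le> part_size p t'"
  using assms unfolding partition_of_def part_size_def
  by (cases "t' = t") (auto simp: sorted_wrt_iff_nth_less)

lemma sum_list_take_mono: "a \<le> b \<Longrightarrow> sum_list (take a xs) \<le> sum_list (take b (xs :: nat list))"
proof -
  assume "a \<le> b"
  then obtain c where "b = a + c" using le_Suc_ex by blast
  thus ?thesis by (simp add: take_add)
qed

lemma ple_plt: "1 \<le> r \<Longrightarrow> r \<le> length p \<Longrightarrow> ple p r = plt p r + part_size p r"
  unfolding ple_def plt_def part_size_def using take_Suc_conv_app_nth[of "r - 1" p] by simp

lemma plt_Suc: "plt p (Suc r) = ple p r"
  by (simp add: plt_def ple_def)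

lemma ple_le_plt: "r < r' \<Longrightarrow> ple p r \<le> plt p r'"
  unfolding ple_def plt_def by (rule sum_list_take_mono) simp

lemma ple_le: "partition_of p n \<Longrightarrow> ple p r \<le> n"
  using sum_list_take_mono[of r "length p" p] unfolding partition_of_def ple_def
  by (cases "r \<le> length p") auto

lemma ple_length: "partition_of p n \<Longrightarrow> ple p (length p) = n"
  unfolding partition_of_def ple_def by simp

lemma sum_part_size: "r \<le> length p \<Longrightarrow> (\<Sum>t\<in>{1..r}. part_size p t) = ple p r"
proof (induction r)
  case 0 thus ?case by (simp add: ple_def)
next
  case (Suc r)
  thus ?case using ple_plt[of "Suc r" p] by (simp add: plt_Suc)
qed

lemma card_parts: "r \<le> length p \<Longrightarrow> card (SIGMA t:{1..r}. {..<part_size p t}) = ple p r"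
  using sum_part_size by (simp add: card_SigmaI)

lemma card_double_parts: "r \<le> length p \<Longrightarrow> card (SIGMA t:{1..r}. {..<2 * part_size p t}) = 2 * ple p r"
  using sum_part_size by (simp add: card_SigmaI sum_distrib_left[symmetric])

(* Mixed-radix encoding a * m + t (t < m) is injective and ordered lexicographically;
   it provides the ranking for the triangular pairing of the vectors g^j v_t. *)
lemma mixed_radix_eq:
  fixes a a' t t' m :: nat
  assumes "t < m" "t' < m" "a * m + t = a' * m + t'"
  shows "a = a' \<and> t = t'"
proof -
  have "(a * m + t) div m = a" using assms(1) by simp
  moreover have "(a' * m + t') div m = a'" using assms(2) by simp
  moreover have "(a * m + t) mod m = t" using assms(1) by simp
  moreover have "(a' * m + t') mod m = t'" using assms(2) by simp
  ultimately show ?thesis using assms(3) by metis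
qed

lemma mixed_radix_less:
  fixes a a' t t' m :: nat
  assumes "t < m" "a' * m + t' < a * m + t"
  shows "a' < a \<or> (a' = a \<and> t' < t)"
proof (rule ccontr)
  assume "\<not> ?thesis"
  hence "a < a' \<or> (a' = a \<and> t \<le> t')" by auto
  thus False
  proof
    assume "a < a'"
    hence "(a + 1) * m \<le> a' * m" by (intro mult_le_mono1) simp
    hence "a * m + m \<le> a' * m" by (simp add: algebra_simps)
    thus False using assms by linarith
  qed (use assms in simp)
qed

(* The permutation w_p: the position i in the r-th lower block lies in no other block, so
   w_p acts on it by the r-th cycle; inside the block it is the shift i \<mapsto> i + 1, and the
   last position p_{\<le>r} is sent to N - p_{<r}. *)
lemma wblock_unique:
  assumes part: "partition_of p (N div 2)" and i: "plt p r < i" "i \<le> ple p r"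
    and r': "i \<in> wblock p N r'"
  shows "r' = r"
proof -
  have "i \<le> N div 2" using i ple_le[OF part, of r] by simp
  moreover have "ple p r' \<le> N div 2" using ple_le[OF part] .
  ultimately have i': "plt p r' < i" "i \<le> ple p r'" using r' unfolding wblock_def by auto
  show ?thesis
  proof (rule ccontr)
    assume "r' \<noteq> r"
    then consider "r' < r" | "r < r'" by linarith
    thus False
      by cases (use ple_le_plt[of r' r p] ple_le_plt[of r r' p] i i' in simp_all)
  qed
qed

lemma wperm_block:
  assumes part: "partition_of p (N div 2)" and r: "1 \<le> r" "r \<le> length p"
    and i: "plt p r < i" "i \<le> ple p r"
  shows "wperm p N i = wcyc p N r i"
proof -
  have inb: "i \<in> wblock p N r" using i unfolding wblock_def by auto
  have "(THE r'. r' \<in> {1..length p} \<and> i \<in> wblock p N r') = r"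
  proof (rule the_equality)
    show "r \<in> {1..length p} \<and> i \<in> wblock p N r" using r inb by simp
    fix r' assume "r' \<in> {1..length p} \<and> i \<in> wblock p N r'"
    thus "r' = r" using wblock_unique[OF part i] by blast
  qed
  moreover have "\<exists>r'\<in>{1..length p}. i \<in> wblock p N r'" using r inb by auto
  ultimately show ?thesis unfolding wperm_def by (simp only: if_True)
qed

lemma wperm_step:
  assumes part: "partition_of p (N div 2)" and r: "1 \<le> r" "r \<le> length p"
    and k: "1 \<le> k" "k < part_size p r"
  shows "wperm p N (plt p r + k) = plt p r + k + 1"
proof -
  have e: "ple p r = plt p r + part_size p r" using ple_plt r by simp
  have "wperm p N (plt p r + k) = wcyc p N r (plt p r + k)"
    by (rule wperm_block[OF part r]) (use k e in auto)
  moreover have "(plt p r < plt p r + k \<and> plt p r + k < ple p r) = True" using k e by simp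
  ultimately show ?thesis unfolding wcyc_def by (simp only: if_True)
qed

lemma wperm_turn:
  assumes part: "partition_of p (N div 2)" and r: "1 \<le> r" "r \<le> length p"
  shows "wperm p N (ple p r) = N - plt p r"
proof -
  have e: "ple p r = plt p r + part_size p r" using ple_plt r by simp
  have "wperm p N (ple p r) = wcyc p N r (ple p r)"
    by (rule wperm_block[OF part r]) (use e part_size_pos[OF part r] in auto)
  moreover have "(plt p r < ple p r \<and> ple p r < ple p r) = False" by simp
  ultimately show ?thesis unfolding wcyc_def by (simp only: if_False if_True) simp
qed

locale flag_pair = finite_dimensional_vector_space scale Basis
  for scale :: "'a::field \<Rightarrow> 'v::ab_group_add \<Rightarrow> 'v" (infixr \<open>*s\<close> 75)
    and Basis :: "'v set" +
  fixes N :: nat and W W' :: "nat \<Rightarrow> 'v set"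
  assumes W_subspace: "i \<le> N \<Longrightarrow> subspace (W i)" and W_dim: "i \<le> N \<Longrightarrow> dim (W i) = i"
    and W_mono: "i \<le> j \<Longrightarrow> j \<le> N \<Longrightarrow> W i \<subseteq> W j"
    and W_0: "W 0 = {0}" and W_N: "W N = UNIV"
    and W'_subspace: "i \<le> N \<Longrightarrow> subspace (W' i)" and W'_dim: "i \<le> N \<Longrightarrow> dim (W' i) = i"
    and W'_mono: "i \<le> j \<Longrightarrow> j \<le> N \<Longrightarrow> W' i \<subseteq> W' j"
begin

(* X_{i-1} \<subseteq> X_i: a jump of W'_{i-1} \<inter> W_j at j is also a jump of W'_i \<inter> W_j. *)
lemma relX_mono: "1 \<le> i \<Longrightarrow> i \<le> N \<Longrightarrow> relX N W W' (i - 1) \<subseteq> relX N W W' i"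
proof
  fix j assume i: "1 \<le> i" "i \<le> N" and j: "j \<in> relX N W W' (i - 1)"
  hence j1: "j \<in> {1..N}" and ne: "W' (i - 1) \<inter> W j \<noteq> W' (i - 1) \<inter> W (j - 1)"
    unfolding relX_def by auto
  have "W (j - 1) \<subseteq> W j" using W_mono j1 by auto
  then obtain x where x: "x \<in> W' (i - 1)" "x \<in> W j" "x \<notin> W (j - 1)" using ne by blast
  have "W' (i - 1) \<subseteq> W' i" using W'_mono i by auto
  hence "x \<in> W' i \<inter> W j" "x \<notin> W' i \<inter> W (j - 1)" using x by auto
  thus "j \<in> relX N W W' i" using j1 unfolding relX_def by blast
qed

lemma dim_inter_flag_step:
  assumes U: "subspace U" and j: "1 \<le> j" "j \<le> N"
  shows "dim (U \<inter> W j) \<le> dim (U \<inter> W (j - 1)) + 1"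
proof -
  let ?S = "U \<inter> W j" and ?T = "W (j - 1)"
  let ?sum = "{x + y |x y. x \<in> ?S \<and> y \<in> ?T}"
  have WW: "?T \<subseteq> W j" using W_mono j by auto
  hence "?S \<inter> ?T = U \<inter> W (j - 1)" by auto
  hence "dim ?sum + dim (U \<inter> W (j - 1)) = dim ?S + (j - 1)"
    using dim_sums_Int[OF subspace_inter[OF U W_subspace[OF j(2)]] W_subspace, of "j - 1"]
      W_dim[of "j - 1"] j by simp
  moreover have sum_sub: "?sum \<subseteq> W j"
  proof
    fix z assume "z \<in> ?sum"
    then obtain x y where "z = x + y" "x \<in> W j" "y \<in> W j" using WW by blast
    thus "z \<in> W j" using subspace_add[OF W_subspace[OF j(2)]] by simp
  qed
  moreover have "dim ?sum \<le> j" using dim_subset[OF sum_sub] W_dim[OF j(2)] by simp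
  ultimately show ?thesis using j by linarith
qed

lemma relX_dim_step:
  assumes i: "i \<le> N" and j: "1 \<le> j" "j \<le> N"
  shows "dim (W' i \<inter> W j) = dim (W' i \<inter> W (j - 1)) + (if j \<in> relX N W W' i then 1 else 0)"
proof (cases "j \<in> relX N W W' i")
  case True
  have sub: "k \<le> N \<Longrightarrow> subspace (W' i \<inter> W k)" for k
    using W_subspace[of k] W'_subspace[OF i] by (rule_tac subspace_inter)
  have "W' i \<inter> W j \<noteq> W' i \<inter> W (j - 1)" using True unfolding relX_def by auto
  moreover have "W (j - 1) \<subseteq> W j" using W_mono j by simp
  ultimately have ps: "W' i \<inter> W (j - 1) \<subset> W' i \<inter> W j" by blast
  have e1: "span (W' i \<inter> W (j - 1)) = W' i \<inter> W (j - 1)" using sub[of "j - 1"] j by simp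
  have e2: "span (W' i \<inter> W j) = W' i \<inter> W j" using sub[OF j(2)] by simp
  have "span (W' i \<inter> W (j - 1)) \<subset> span (W' i \<inter> W j)" unfolding e1 e2 by (rule ps)
  hence "dim (W' i \<inter> W (j - 1)) < dim (W' i \<inter> W j)" by (rule dim_psubset)
  thus ?thesis using dim_inter_flag_step[OF W'_subspace[OF i] j] True by simp
next
  case False
  hence "W' i \<inter> W j = W' i \<inter> W (j - 1)" using j unfolding relX_def by auto
  thus ?thesis using False by simp
qed

(* Summing the jumps from dim (W'_i \<inter> W_0) = 0 to dim (W'_i \<inter> W_N) = i gives |X_i| = i. *)
lemma relX_card:
  assumes i: "i \<le> N"
  shows "card (relX N W W' i) = i"
proof -
  have count: "J \<le> N \<Longrightarrow> dim (W' i \<inter> W J) = card (relX N W W' i \<inter> {1..J})" for J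
  proof (induction J)
    case 0
    show ?case using W_0 by simp
  next
    case (Suc J)
    show ?case
    proof (cases "Suc J \<in> relX N W W' i")
      case True
      hence "relX N W W' i \<inter> {1..Suc J} = insert (Suc J) (relX N W W' i \<inter> {1..J})"
        by (auto simp: le_Suc_eq)
      thus ?thesis using relX_dim_step[OF i, of "Suc J"] Suc True by simp
    next
      case False
      hence "relX N W W' i \<inter> {1..Suc J} = relX N W W' i \<inter> {1..J}"
        by (auto simp: le_Suc_eq)
      thus ?thesis using relX_dim_step[OF i, of "Suc J"] Suc False by simp
    qed
  qed
  have "dim (W' i \<inter> W N) = i" using W_N W'_dim i by simp
  moreover have "relX N W W' i \<inter> {1..N} = relX N W W' i" unfolding relX_def by blast
  ultimately show ?thesis using count[of N] by simp
qed

lemma relpos_mem: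
  assumes i: "1 \<le> i" "i \<le> N"
  shows "relpos N W W' i \<in> relX N W W' i"
proof -
  let ?X = "relX N W W' i" and ?Y = "relX N W W' (i - 1)"
  have "finite ?Y" unfolding relX_def by simp
  hence "card (?X - ?Y) = 1" using relX_mono[OF i] relX_card i by (simp add: card_Diff_subset)
  then obtain j where j: "?X - ?Y = {j}" using card_1_singletonE by blast
  have "relpos N W W' i = j" unfolding relpos_def by (rule the_equality) (use j in blast)+
  thus ?thesis using j by blast
qed

end

locale relative_position_setting =
  isometry_space scale Basis B g + flag_pair scale Basis N W W'
  for scale :: "'a::field \<Rightarrow> 'v::ab_group_add \<Rightarrow> 'v" (infixr \<open>*s\<close> 75)
    and Basis :: "'v set" and B :: "'v \<Rightarrow> 'v \<Rightarrow> 'a" and g :: "'v \<Rightarrow> 'v"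
    and N :: nat and W W' :: "nat \<Rightarrow> 'v set" +
  fixes Q :: "'v \<Rightarrow> 'a" and p :: "nat list"
  assumes alg_closed: "alg_closed TYPE('a)"
    and form: "form_setting scale B Q"
    and dimension_N: "dimension = N"
    and N_ge_2: "2 \<le> N"
    and partition: "partition_of p (N div 2)"
    and W_perp: "i \<le> N div 2 \<Longrightarrow> perp B (W i) = W (N - i)"
    and W_isotropic: "i \<le> N div 2 \<Longrightarrow> x \<in> W i \<Longrightarrow> Q x = 0"
    and relative_position: "1 \<le> i \<Longrightarrow> i \<le> N \<Longrightarrow> relpos N W W' i = wperm p N i"
    and g_maps_flag: "i \<le> N \<Longrightarrow> g ` W i = W' i"
begin

abbreviation "nn \<equiv> N div 2"
abbreviation "sig \<equiv> length p"
abbreviation "P \<equiv> part_size p"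

lemmas P_pos = part_size_pos[OF partition]
lemmas P_antimono = part_size_antimono[OF partition]
lemmas ple_le_nn = ple_le[OF partition]
lemmas ple_sig = ple_length[OF partition]

lemma sig_pos: "1 \<le> sig"
  using partition N_ge_2 unfolding partition_of_def by (cases p) auto

(* Both form settings give a reflexive form: an alternating form is skew, and the polar form of
   a quadratic form is symmetric. *)
lemma B_reflexive: "B y x = 0 \<longleftrightarrow> B x y = 0"
proof -
  consider (alternating) "\<forall>x. B x x = 0" | (polar) "\<forall>x y. B x y = Q (x + y) - Q x - Q y"
    using form unfolding form_setting_def by blast
  thus ?thesis
  proof cases
    case alternating
    have "B (x + y) (x + y) = B x x + B x y + (B y x + B y y)"
      by (simp add: B_add1 B_add2 add.assoc)
    hence "B x y + B y x = 0" using alternating by simp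
    hence "B y x = - B x y" by (simp add: add_eq_0_iff)
    thus ?thesis by simp
  next
    case polar
    hence "B y x = B x y" by (simp add: add.commute)
    thus ?thesis by simp
  qed
qed

(* W_n is totally isotropic, since W_n \<subseteq> W_{N-n} = W_n^\<perp>. *)
lemma W_nn_isotropic: "x \<in> W nn \<Longrightarrow> y \<in> W nn \<Longrightarrow> B x y = 0"
proof -
  assume x: "x \<in> W nn" and y: "y \<in> W nn"
  have "W nn \<subseteq> W (N - nn)" using W_mono by simp
  hence "x \<in> perp B (W nn)" using x W_perp[of nn] by auto
  thus ?thesis using y unfolding perp_def by auto
qed

lemma W_le_nn: "i \<le> nn \<Longrightarrow> W i \<subseteq> W nn"
  using W_mono by simp

lemma relpos_witness:
  assumes i: "1 \<le> i" "i \<le> N"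
  shows "\<exists>x\<in>W i. g x \<in> W (wperm p N i) \<and> g x \<notin> W (wperm p N i - 1)"
proof -
  let ?j = "wperm p N i"
  have "?j \<in> relX N W W' i" using relpos_mem[OF i] relative_position[OF i] by simp
  hence j: "?j \<in> {1..N}" "W' i \<inter> W ?j \<noteq> W' i \<inter> W (?j - 1)" unfolding relX_def by auto
  have "W (?j - 1) \<subseteq> W ?j" using W_mono j by auto
  then obtain y where y: "y \<in> W' i" "y \<in> W ?j" "y \<notin> W (?j - 1)" using j by blast
  obtain x where "x \<in> W i" "y = g x" using y(1) g_maps_flag i by auto
  thus ?thesis using y by blast
qed

definition admissible :: "nat \<Rightarrow> (nat \<Rightarrow> 'v) \<Rightarrow> bool" where
  "admissible r v \<longleftrightarrow>
    (\<forall>i\<le>P r. W (plt p r + i) =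
       span ((\<Union>t\<in>{1..<r}. span ((\<lambda>j. gpow g (int j) (v t)) ` {..<P t}))
             \<union> (\<lambda>j. gpow g (int j) (v r)) ` {..<i})) \<and>
    (\<forall>t\<in>{1..<r}. \<forall>i\<in>{- int (P t) .. int (P t) - 1}. B (gpow g i (v t)) (v r) = 0) \<and>
    (\<forall>i\<in>{- int (P r) + 1 .. int (P r) - 1}. B (v r) (gpow g i (v r)) = 0) \<and>
    Q (v r) = 0 \<and> B (v r) (gpow g (int (P r)) (v r)) = 1 \<and>
    indep_family scale (\<lambda>(t, i). gpow g (- int (P t) + int i) (v t))
      (SIGMA t:{1..r}. {..<2 * P t}) \<and>
    direct_sum_UNIV (W (ple p r))
      (perp B (span ((\<lambda>(t, i). gpow g (- int (P t) + int i) (v t)) ` (SIGMA t:{1..r}. {..<P t}))))"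

lemma admissible_orth:
  "admissible r v \<Longrightarrow> t \<in> {1..<r} \<Longrightarrow> i \<in> {- int (P t) .. int (P t) - 1}
   \<Longrightarrow> B (gpow g i (v t)) (v r) = 0"
  unfolding admissible_def by blast

lemma admissible_iso:
  "admissible r v \<Longrightarrow> i \<in> {- int (P r) + 1 .. int (P r) - 1} \<Longrightarrow> B (v r) (gpow g i (v r)) = 0"
  unfolding admissible_def by blast

lemma admissible_norm: "admissible r v \<Longrightarrow> B (v r) (gpow g (int (P r)) (v r)) = 1"
  unfolding admissible_def by blast

lemma props_i_v_iff: "props_i_v scale B Q g W p v \<longleftrightarrow> (\<forall>r\<in>{1..sig}. admissible r v)"
  unfolding props_i_v_def admissible_def part_size_def by (rule refl)

definition flag_gens :: "(nat \<Rightarrow> 'v) \<Rightarrow> nat \<Rightarrow> 'v set" where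
  "flag_gens v r = (\<lambda>(t, j). gpow g (int j) (v t)) ` (SIGMA t:{1..<r}. {..<P t})"
definition orbit :: "'v \<Rightarrow> nat \<Rightarrow> 'v set" where
  "orbit x k = (\<lambda>j. gpow g (int j) x) ` {..<k}"
definition E_gens :: "(nat \<Rightarrow> 'v) \<Rightarrow> nat \<Rightarrow> 'v set" where
  "E_gens v r = (\<lambda>(t, i). gpow g (- int (P t) + int i) (v t)) ` (SIGMA t:{1..r}. {..<P t})"
definition all_gens :: "(nat \<Rightarrow> 'v) \<Rightarrow> nat \<Rightarrow> 'v set" where
  "all_gens v r = (\<lambda>(t, i). gpow g (- int (P t) + int i) (v t)) ` (SIGMA t:{1..r}. {..<2 * P t})"
definition orbit_ends :: "(nat \<Rightarrow> 'v) \<Rightarrow> nat \<Rightarrow> 'v set" where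
  "orbit_ends v r = (\<lambda>t. gpow g (int (P t)) (v t)) ` {1..<r}"

lemma flag_gens_mem: "1 \<le> t \<Longrightarrow> t < r \<Longrightarrow> j < P t \<Longrightarrow> gpow g (int j) (v t) \<in> flag_gens v r"
  unfolding flag_gens_def by (rule image_eqI[of _ _ "(t, j)"]) auto

lemma flag_gens_cases:
  "y \<in> flag_gens v r \<Longrightarrow> \<exists>t j. 1 \<le> t \<and> t < r \<and> j < P t \<and> y = gpow g (int j) (v t)"
  unfolding flag_gens_def by auto

lemma flag_gens_Suc: "flag_gens v (Suc r) = flag_gens v r \<union> (if r = 0 then {} else orbit (v r) (P r))"
proof -
  have "(SIGMA t:{1..<Suc r}. {..<P t}) =
      (SIGMA t:{1..<r}. {..<P t}) \<union> (if r = 0 then {} else {r} \<times> {..<P r})"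
    by (auto simp: less_Suc_eq)
  thus ?thesis unfolding flag_gens_def orbit_def by auto
qed

lemma orbit_Suc: "orbit x (Suc k) = insert (gpow g (int k) x) (orbit x k)"
  unfolding orbit_def by (simp add: lessThan_Suc)

lemma orbit_1: "orbit x 1 = {x}"
  unfolding orbit_def by auto

lemma span_Union_spans: "span ((\<Union>t\<in>T. span (Z t)) \<union> Y) = span ((\<Union>t\<in>T. Z t) \<union> Y)"
proof -
  have "(\<Union>t\<in>T. Z t) \<union> Y \<subseteq> span ((\<Union>t\<in>T. span (Z t)) \<union> Y)"
    using span_superset[of "(\<Union>t\<in>T. span (Z t)) \<union> Y"] span_superset[of "Z _"] by blast
  moreover have "(\<Union>t\<in>T. span (Z t)) \<union> Y \<subseteq> span ((\<Union>t\<in>T. Z t) \<union> Y)"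
  proof -
    have "span (Z t) \<subseteq> span ((\<Union>t\<in>T. Z t) \<union> Y)" if "t \<in> T" for t
      using that by (intro span_mono) auto
    thus ?thesis using span_superset[of "(\<Union>t\<in>T. Z t) \<union> Y"] by blast
  qed
  ultimately show ?thesis by (simp add: span_eq)
qed

lemma span_condition_i:
  "span ((\<Union>t\<in>{1..<r}. span ((\<lambda>j. gpow g (int j) (v t)) ` {..<P t}))
         \<union> (\<lambda>j. gpow g (int j) (v r)) ` {..<i})
   = span (flag_gens v r \<union> orbit (v r) i)"
proof -
  have "flag_gens v r = (\<Union>t\<in>{1..<r}. orbit (v t) (P t))"
    unfolding flag_gens_def orbit_def by auto
  thus ?thesis unfolding orbit_def by (simp add: span_Union_spans)
qed

lemma admissible_flag:
  "admissible r v \<Longrightarrow> i \<le> P r \<Longrightarrow> W (plt p r + i) = span (flag_gens v r \<union> orbit (v r) i)"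
  unfolding admissible_def span_condition_i by auto

lemma flag_extend:
  assumes j: "Suc j \<le> N" and S: "W j = span S" and y: "y \<in> W (Suc j)" "y \<notin> W j"
  shows "W (Suc j) = span (insert y S)"
proof -
  have sub: "span (insert y S) \<subseteq> W (Suc j)"
    using y(1) W_mono[of j "Suc j"] S span_superset[of S] W_subspace[OF j] j
    by (intro span_minimal) auto
  have "dim (span (insert y S)) = dim S + 1" using y(2) S by (simp add: dim_insert)
  also have "dim S = j" using S W_dim[of j] j by (metis Suc_leD dim_span)
  finally have "dim (W (Suc j)) \<le> dim (span (insert y S))" using W_dim[OF j] by simp
  thus ?thesis using subspace_dim_equal[OF subspace_span W_subspace[OF j] sub] by simp
qed

(* One step of the construction: v 1, ..., v (r - 1) are admissible and s = p_{<r}. *)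
context
  fixes r :: nat and v :: "nat \<Rightarrow> 'v"
  assumes r: "1 \<le> r" "r \<le> sig" and prev: "\<forall>r'\<in>{1..<r}. admissible r' v"
begin

lemma block_le_nn: "plt p r + P r \<le> nn"
  using ple_plt[OF r] ple_le_nn[of r] by simp

lemma prev_orth:
  "1 \<le> t' \<Longrightarrow> t' < t \<Longrightarrow> t < r \<Longrightarrow> - int (P t') \<le> i \<Longrightarrow> i \<le> int (P t') - 1
   \<Longrightarrow> B (gpow g i (v t')) (v t) = 0"
  using admissible_orth[of t v t' i] prev by auto

lemma prev_orbit_isotropic:
  "1 \<le> t \<Longrightarrow> t < r \<Longrightarrow> - int (P t) + 1 \<le> i \<Longrightarrow> i \<le> int (P t) - 1
   \<Longrightarrow> B (v t) (gpow g i (v t)) = 0"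
  using admissible_iso[of t v i] prev by auto

lemma prev_normalised: "1 \<le> t \<Longrightarrow> t < r \<Longrightarrow> B (v t) (gpow g (int (P t)) (v t)) = 1"
  using admissible_norm[of t v] prev by auto

lemma W_block_start: "W (plt p r) = span (flag_gens v r)"
proof (cases "r = 1")
  case True
  have "flag_gens v 1 = {}" unfolding flag_gens_def by auto
  thus ?thesis using True W_0 by (simp add: plt_def)
next
  case False
  hence r1: "1 \<le> r - 1" "r - 1 \<le> sig" using r by auto
  have "admissible (r - 1) v" using prev False r by simp
  hence "W (plt p (r - 1) + P (r - 1)) = span (flag_gens v (r - 1) \<union> orbit (v (r - 1)) (P (r - 1)))"
    using admissible_flag by simp
  moreover have "plt p (r - 1) + P (r - 1) = plt p r" using ple_plt[OF r1] plt_Suc[of p "r - 1"] r by simp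
  moreover have "flag_gens v (r - 1) \<union> orbit (v (r - 1)) (P (r - 1)) = flag_gens v r"
    using flag_gens_Suc[of v "r - 1"] False r by simp
  ultimately show ?thesis by simp
qed

lemma prev_direct_sum: "direct_sum_UNIV (W (plt p r)) (perp B (span (E_gens v (r - 1))))"
proof (cases "r = 1")
  case True
  have "E_gens v 0 = {}" unfolding E_gens_def by auto
  moreover have "perp B {0} = UNIV" unfolding perp_def by simp
  ultimately show ?thesis using True W_0 by (simp add: plt_def direct_sum_UNIV_def)
next
  case False
  have "admissible (r - 1) v" using prev False r by simp
  moreover have "ple p (r - 1) = plt p r" using plt_Suc[of p "r - 1"] r by simp
  ultimately show ?thesis unfolding admissible_def E_gens_def by simp
qed

lemma prev_in_W: "1 \<le> t \<Longrightarrow> t < r \<Longrightarrow> v t \<in> W (plt p r)"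
  using flag_gens_mem[of t r 0 v] P_pos[of t] r W_block_start span_superset by fastforce

lemma W_block_le_nn: "k \<le> P r \<Longrightarrow> W (plt p r + k) \<subseteq> W nn"
  using W_le_nn block_le_nn by simp

lemma prev_in_W_nn: "1 \<le> t \<Longrightarrow> t < r \<Longrightarrow> v t \<in> W nn"
  using prev_in_W W_block_le_nn[of 0] by auto

(* The vectors g^{p_t} v_t (t < r) pair triangularly with the v_t, so a combination of them
   orthogonal to all v_t vanishes. *)
lemma orbit_ends_trivial:
  assumes \<pi>: "\<pi> \<in> span (orbit_ends v r)" and orth: "\<And>t. 1 \<le> t \<Longrightarrow> t < r \<Longrightarrow> B (v t) \<pi> = 0"
  shows "\<pi> = 0"
proof (rule triangular_pairing_right[where I="{1..<r}" and f=v
      and h="\<lambda>t. gpow g (int (P t)) (v t)" and \<rho>="\<lambda>t. r - t"])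
  show "inj_on (\<lambda>t. r - t) {1..<r}" by (rule inj_onI) auto
  show "B (v i) (gpow g (int (P i)) (v i)) \<noteq> 0" if "i \<in> {1..<r}" for i
    using prev_normalised that by simp
  show "B (v i) (gpow g (int (P j)) (v j)) = 0"
    if "i \<in> {1..<r}" "j \<in> {1..<r}" "r - j < r - i" for i j
  proof -
    have "P j \<le> P i" using P_antimono[of i j] that r by auto
    hence "B (gpow g (- int (P j)) (v i)) (v j) = 0"
      using prev_orth[of i j "- int (P j)"] that P_pos[of i] r by auto
    thus ?thesis using gpow_B_shift' by simp
  qed
qed (use \<pi> orth in \<open>auto simp: orbit_ends_def\<close>)

(* A candidate exists: project a vector of W_{s+1} - W_s onto E_{r-1}^\<perp> along W_s;
   it is orthogonal to the g^i v_t with i < 0 by construction and to those with i \<ge> 0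
   because W_n is totally isotropic. *)
lemma exists_candidate:
  "\<exists>c. c \<in> W (plt p r + 1) \<and> c \<notin> W (plt p r) \<and>
     (\<forall>t\<in>{1..<r}. \<forall>i\<in>{- int (P t) .. int (P t) - 1}. B (gpow g i (v t)) c = 0)"
proof -
  let ?s = "plt p r"
  have sN: "?s + 1 \<le> nn" "?s + 1 \<le> N" using block_le_nn P_pos[OF r] by auto
  have "\<not> W (?s + 1) \<subseteq> W ?s"
  proof
    assume "W (?s + 1) \<subseteq> W ?s"
    hence "dim (W (?s + 1)) \<le> dim (W ?s)" by (rule dim_subset)
    thus False using W_dim[OF sN(2)] W_dim[of ?s] sN by simp
  qed
  then obtain y where y: "y \<in> W (?s + 1)" "y \<notin> W ?s" by blast
  obtain a c where ac: "a \<in> W ?s" "c \<in> perp B (span (E_gens v (r - 1)))" "y = a + c"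
    using prev_direct_sum unfolding direct_sum_UNIV_def by blast
  have sub: "subspace (W (?s + 1))" "subspace (W ?s)" using W_subspace sN by auto
  have "W ?s \<subseteq> W (?s + 1)" using W_mono sN by simp
  hence cW: "c \<in> W (?s + 1)" using y(1) ac sub(1) by (metis add_diff_cancel_left' subsetD subspace_diff)
  have cnot: "c \<notin> W ?s" using ac y(2) sub(2) by (auto simp: subspace_add)
  have cnn: "c \<in> W nn" using cW W_le_nn[OF sN(1)] by blast
  have "B (gpow g i (v t)) c = 0" if t: "t \<in> {1..<r}" and i: "i \<in> {- int (P t) .. int (P t) - 1}" for t i
  proof (cases "i < 0")
    case True
    have "(t, nat (i + int (P t))) \<in> (SIGMA t:{1..r - 1}. {..<P t})" using t i True by auto
    moreover have "gpow g i (v t) = (\<lambda>(t, i). gpow g (- int (P t) + int i) (v t)) (t, nat (i + int (P t)))"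
      using i by simp
    ultimately have "gpow g i (v t) \<in> E_gens v (r - 1)" unfolding E_gens_def by blast
    hence "B c (gpow g i (v t)) = 0" using ac(2) span_superset unfolding perp_def by blast
    thus ?thesis using B_reflexive by blast
  next
    case False
    have "gpow g (int (nat i)) (v t) \<in> flag_gens v r" using t i False by (intro flag_gens_mem) auto
    hence "gpow g i (v t) \<in> W nn"
      using False W_block_start span_superset W_block_le_nn[of 0] by fastforce
    thus ?thesis using W_nn_isotropic cnn by blast
  qed
  thus ?thesis using cW cnot by blast
qed

context
  fixes x :: 'v
  assumes x: "x \<in> W (plt p r + 1)" "x \<notin> W (plt p r)"
    and x_orth: "\<forall>t\<in>{1..<r}. \<forall>i\<in>{- int (P t) .. int (P t) - 1}. B (gpow g i (v t)) x = 0"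
begin

lemma prev_orth_orbit: "1 \<le> t \<Longrightarrow> t < r \<Longrightarrow> 1 \<le> k \<Longrightarrow> k \<le> P r \<Longrightarrow> B (v t) (gpow g (int k) x) = 0"
proof -
  assume t: "1 \<le> t" "t < r" and k: "1 \<le> k" "k \<le> P r"
  have "P r \<le> P t" using P_antimono t r by simp
  hence "B (gpow g (- int k) (v t)) x = 0" using x_orth t k by auto
  thus ?thesis using gpow_B_shift' by simp
qed

lemma g_image_gens:
  assumes k: "1 \<le> k"
  shows "g ` (flag_gens v r \<union> orbit x (k - 1)) \<subseteq> flag_gens v r \<union> orbit x k \<union> orbit_ends v r"
proof
  fix y assume "y \<in> g ` (flag_gens v r \<union> orbit x (k - 1))"
  then obtain y' where y': "y = g y'" "y' \<in> flag_gens v r \<union> orbit x (k - 1)" by blast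
  show "y \<in> flag_gens v r \<union> orbit x k \<union> orbit_ends v r"
  proof (cases "y' \<in> flag_gens v r")
    case True
    then obtain t j where tj: "1 \<le> t" "t < r" "j < P t" "y' = gpow g (int j) (v t)"
      using flag_gens_cases by blast
    have y: "y = gpow g (int (Suc j)) (v t)" using tj y' g_gpow_nat by simp
    show ?thesis
    proof (cases "Suc j < P t")
      case True thus ?thesis using flag_gens_mem[OF tj(1,2) True] y by simp
    next
      case False
      hence "Suc j = P t" using tj by simp
      thus ?thesis unfolding orbit_ends_def using y tj by auto
    qed
  next
    case False
    then obtain j where j: "j < k - 1" "y' = gpow g (int j) x" using y' unfolding orbit_def by auto
    hence "y = gpow g (int (Suc j)) x" "Suc j < k" using y' g_gpow_nat by auto
    hence "y \<in> orbit x k" unfolding orbit_def by (intro image_eqI[of _ _ "Suc j"]) auto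
    thus ?thesis by simp
  qed
qed

(* If W_{s+k} is spanned by the generators and g z is orthogonal to all v_t (t < r),
   then g z \<in> W_{s+k} + S(g^k x): the components along the orbit ends g^{p_t} v_t are killed
   by triangularity. *)
lemma g_step:
  assumes k: "1 \<le> k" "k \<le> P r" and span_k: "W (plt p r + k) = span (flag_gens v r \<union> orbit x k)"
    and z: "z \<in> W (plt p r + k)" and orth: "\<And>t. 1 \<le> t \<Longrightarrow> t < r \<Longrightarrow> B (v t) (g z) = 0"
  shows "\<exists>z0\<in>W (plt p r + k). \<exists>l. g z = z0 + l *s gpow g (int k) x"
proof -
  let ?w = "gpow g (int (k - 1)) x"
  have "orbit x k = insert ?w (orbit x (k - 1))" using orbit_Suc[of x "k - 1"] k by simp
  hence "z \<in> span (insert ?w (flag_gens v r \<union> orbit x (k - 1)))" using z span_k by simp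
  then obtain l where l: "z - l *s ?w \<in> span (flag_gens v r \<union> orbit x (k - 1))"
    using span_breakdown_eq by blast
  have "g (z - l *s ?w) \<in> span (g ` (flag_gens v r \<union> orbit x (k - 1)))" using l g_image_span by blast
  also have "\<dots> \<subseteq> span ((flag_gens v r \<union> orbit x k) \<union> orbit_ends v r)"
    using g_image_gens[OF k(1)] by (intro span_mono) auto
  finally obtain a \<pi> where a: "g (z - l *s ?w) = a + \<pi>" "a \<in> span (flag_gens v r \<union> orbit x k)"
      "\<pi> \<in> span (orbit_ends v r)"
    unfolding span_Un by blast
  have "g ?w = gpow g (int k) x" using g_gpow_nat[of "k - 1" x] k by simp
  moreover have "g z = g (z - l *s ?w) + l *s g ?w"
    using g_linear unfolding Vector_Spaces.linear_iff by (metis diff_add_cancel)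
  ultimately have gz: "g z = a + \<pi> + l *s gpow g (int k) x" using a(1) by simp
  have aW: "a \<in> W (plt p r + k)" using a(2) span_k by simp
  have "\<pi> = 0"
  proof (rule orbit_ends_trivial[OF a(3)])
    fix t assume t: "1 \<le> t" "t < r"
    have "B (v t) a = 0" using W_nn_isotropic[OF prev_in_W_nn[OF t]] W_block_le_nn[OF k(2)] aW by auto
    thus "B (v t) \<pi> = 0" using gz orth[OF t] prev_orth_orbit[OF t k] by (simp add: B_add2 B_scale2)
  qed
  thus ?thesis using gz aW by auto
qed

(* Property (i): W_{s+k} = W_s + S(x, g x, ..., g^{k-1} x) for k \<le> p_r, by induction on k
   using w(s+k) = s+k+1 for 1 \<le> k < p_r. *)
lemma W_block_span: "k \<le> P r \<Longrightarrow> W (plt p r + k) = span (flag_gens v r \<union> orbit x k)"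
proof (induction k)
  case 0 thus ?case using W_block_start unfolding orbit_def by simp
next
  case (Suc k)
  show ?case
  proof (cases "k = 0")
    case True
    have "Suc (plt p r) \<le> N" using block_le_nn P_pos[OF r] by simp
    thus ?thesis using flag_extend[OF _ W_block_start] x True orbit_1 by simp
  next
    case False
    let ?s = "plt p r"
    have k: "1 \<le> k" "k < P r" using False Suc.prems by auto
    have span_k: "W (?s + k) = span (flag_gens v r \<union> orbit x k)" using Suc k by simp
    have iN: "1 \<le> ?s + k" "?s + k \<le> N" using k block_le_nn by auto
    obtain z where z: "z \<in> W (?s + k)" "g z \<in> W (?s + k + 1)" "g z \<notin> W (?s + k)"
      using relpos_witness[OF iN] wperm_step[OF partition r k] by auto
    have "B (v t) (g z) = 0" if t: "1 \<le> t" "t < r" for t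
      using W_nn_isotropic[OF prev_in_W_nn[OF t]] W_block_le_nn[of "k + 1"] z(2) k by auto
    then obtain z0 l where zl: "z0 \<in> W (?s + k)" "g z = z0 + l *s gpow g (int k) x"
      using g_step[OF k(1) _ span_k z(1)] k by auto
    have sub1: "subspace (W (?s + k + 1))" and sub0: "subspace (W (?s + k))"
      using W_subspace block_le_nn k by auto
    have l0: "l \<noteq> 0" using zl z(3) by auto
    have "gpow g (int k) x = inverse l *s (g z - z0)" using zl l0 by simp
    moreover have "W (?s + k) \<subseteq> W (?s + k + 1)" using W_mono iN block_le_nn k by simp
    ultimately have "gpow g (int k) x \<in> W (?s + k + 1)"
      using sub1 z(2) zl(1) by (auto intro!: subspace_scale subspace_diff)
    moreover have "gpow g (int k) x \<notin> W (?s + k)"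
      using zl sub0 z(3) by (auto simp: subspace_add subspace_scale)
    ultimately have "W (Suc (?s + k)) = span (insert (gpow g (int k) x) (flag_gens v r \<union> orbit x k))"
      using flag_extend[OF _ span_k] block_le_nn k by simp
    thus ?thesis using orbit_Suc[of x k] by simp
  qed
qed

(* The orbit vectors x, ..., g^{p_r - 1} x lie in the totally isotropic W_n, so x is
   orthogonal to g^i x for |i| < p_r (property (iii)). *)
lemma candidate_orbit_isotropic:
  assumes i: "- int (P r) + 1 \<le> i" "i \<le> int (P r) - 1"
  shows "B x (gpow g i x) = 0"
proof -
  have orbit_nn: "gpow g (int j) x \<in> W nn" if "j < P r" for j
  proof -
    have "gpow g (int j) x \<in> orbit x (P r)" unfolding orbit_def using that by simp
    thus ?thesis using W_block_span[of "P r"] span_superset W_block_le_nn[of "P r"] by blast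
  qed
  have x_nn: "x \<in> W nn" using orbit_nn[of 0] P_pos[OF r] by simp
  show ?thesis
  proof (cases "0 \<le> i")
    case True
    thus ?thesis using orbit_nn[of "nat i"] i W_nn_isotropic x_nn by simp
  next
    case False
    hence "B (gpow g (- i) x) x = 0" using orbit_nn[of "nat (- i)"] i W_nn_isotropic x_nn by simp
    thus ?thesis using gpow_B_shift' by simp
  qed
qed

(* B(x, g^{p_r} x) \<noteq> 0. Here w(p_{\<le>r}) = N - s: some z \<in> W_{s+p_r} has g z in
   W_{N-s} = W_s^\<perp> but not in W_{N-s-1} = W_{s+1}^\<perp>, so g z pairs nontrivially with x;
   writing g z = z0 + l g^{p_r} x with z0 isotropic against x gives the claim. *)
lemma orbit_pairing_nonzero: "B x (gpow g (int (P r)) x) \<noteq> 0"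
proof -
  let ?s = "plt p r"
  have pr: "1 \<le> P r" using P_pos r by simp
  have iN: "1 \<le> ple p r" "ple p r \<le> N" using ple_plt[OF r] pr ple_le_nn[of r] by auto
  obtain z where z: "z \<in> W (ple p r)" "g z \<in> W (N - ?s)" "g z \<notin> W (N - ?s - 1)"
    using relpos_witness[OF iN] wperm_turn[OF partition r] by auto
  have sn: "?s \<le> nn" "?s + 1 \<le> nn" using block_le_nn pr by auto
  have gz_perp: "g z \<in> perp B (W ?s)" using z(2) W_perp[OF sn(1)] by simp
  have "B (v t) (g z) = 0" if t: "1 \<le> t" "t < r" for t
    using gz_perp prev_in_W[OF t] B_reflexive unfolding perp_def by blast
  moreover have "z \<in> W (?s + P r)" using z(1) ple_plt[OF r] by simp
  ultimately obtain z0 l where zl: "z0 \<in> W (?s + P r)" "g z = z0 + l *s gpow g (int (P r)) x"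
    using g_step[OF pr order_refl W_block_span] by blast
  have "N - ?s - 1 = N - (?s + 1)" by simp
  hence "g z \<notin> perp B (W (?s + 1))" using z(3) W_perp[OF sn(2)] by simp
  then obtain y where y: "y \<in> W (?s + 1)" "B (g z) y \<noteq> 0" unfolding perp_def by blast
  have "y \<in> span (insert x (flag_gens v r))" using y(1) W_block_span[of 1] pr orbit_1 by simp
  then obtain m where m: "y - m *s x \<in> span (flag_gens v r)" using span_breakdown_eq by blast
  have "B (g z) (y - m *s x) = 0" using gz_perp m W_block_start unfolding perp_def by simp
  hence "B (g z) x \<noteq> 0" using y(2) by (auto simp: B_diff2 B_scale2)
  moreover have "B z0 x = 0"
    using W_nn_isotropic W_block_le_nn[of "P r"] W_block_le_nn[of 1] zl(1) x(1) pr by auto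
  ultimately have "B (gpow g (int (P r)) x) x \<noteq> 0" using zl(2) by (auto simp: B_add1 B_scale1)
  thus ?thesis using B_reflexive by blast
qed

end

(* Rescaling a candidate by a square root (k is algebraically closed) normalises
   B(x, g^{p_r} x) to 1. *)
lemma exists_normalised_candidate:
  "\<exists>x. x \<in> W (plt p r + 1) \<and> x \<notin> W (plt p r) \<and>
     (\<forall>t\<in>{1..<r}. \<forall>i\<in>{- int (P t) .. int (P t) - 1}. B (gpow g i (v t)) x = 0) \<and>
     B x (gpow g (int (P r)) x) = 1"
proof -
  obtain c where c: "c \<in> W (plt p r + 1)" "c \<notin> W (plt p r)"
      "\<forall>t\<in>{1..<r}. \<forall>i\<in>{- int (P t) .. int (P t) - 1}. B (gpow g i (v t)) c = 0"
    using exists_candidate by blast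
  obtain m where m: "m * m * B c (gpow g (int (P r)) c) = 1"
    using alg_closed_inverse_square[OF alg_closed orbit_pairing_nonzero[OF c]] by blast
  hence m0: "m \<noteq> 0" by auto
  have sub: "subspace (W (plt p r + 1))" "subspace (W (plt p r))"
    using W_subspace block_le_nn P_pos[OF r] by auto
  have "m *s c \<in> W (plt p r + 1)" using c(1) sub(1) by (rule subspace_scale[rotated])
  moreover have "m *s c \<notin> W (plt p r)"
  proof
    assume "m *s c \<in> W (plt p r)"
    hence "inverse m *s (m *s c) \<in> W (plt p r)" using sub(2) by (rule subspace_scale[rotated])
    thus False using c(2) m0 by simp
  qed
  moreover have "\<forall>t\<in>{1..<r}. \<forall>i\<in>{- int (P t) .. int (P t) - 1}. B (gpow g i (v t)) (m *s c) = 0"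
    using c(3) by (simp add: B_scale2)
  moreover have "B (m *s c) (gpow g (int (P r)) (m *s c)) = 1"
    using m by (simp add: gpow_scale B_scale1 B_scale2 algebra_simps)
  ultimately show ?thesis by blast
qed

end

(* The key
   point is that the pairing between pos_gen (t, j) = g^j v_t and neg_gen (t, i) =
   g^{-p_t+i} v_t (t \<le> r; i, j < p_t) is triangular with nonzero diagonal for the rank
   (p_t - i)(sigma + 1) + t. *)
context
  fixes r :: nat and v :: "nat \<Rightarrow> 'v"
  assumes r: "r \<le> sig"
    and span_hyp: "W (ple p r) = span (flag_gens v (Suc r))"
    and orth_hyp: "\<And>t t' e. 1 \<le> t' \<Longrightarrow> t' < t \<Longrightarrow> t \<le> r \<Longrightarrow> - int (P t') \<le> e
                     \<Longrightarrow> e \<le> int (P t') - 1 \<Longrightarrow> B (gpow g e (v t')) (v t) = 0"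
    and iso_hyp: "\<And>t e. 1 \<le> t \<Longrightarrow> t \<le> r \<Longrightarrow> - int (P t) + 1 \<le> e \<Longrightarrow> e \<le> int (P t) - 1
                    \<Longrightarrow> B (v t) (gpow g e (v t)) = 0"
    and norm_hyp: "\<And>t. 1 \<le> t \<Longrightarrow> t \<le> r \<Longrightarrow> B (v t) (gpow g (int (P t)) (v t)) = 1"
begin

abbreviation "blocks \<equiv> SIGMA t:{1..r}. {..<P t}"
abbreviation "pos_gen \<equiv> (\<lambda>(t, j). gpow g (int j) (v t))"
abbreviation "neg_gen \<equiv> (\<lambda>(t, i). gpow g (- int (P t) + int i) (v t))"
abbreviation "rank \<equiv> (\<lambda>(t, i). (P t - i) * (sig + 1) + t)"

lemma pos_gens_eq: "pos_gen ` blocks = flag_gens v (Suc r)"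
  unfolding flag_gens_def by (auto simp: less_Suc_eq_le)

lemma E_gens_eq: "E_gens v r = neg_gen ` blocks"
  unfolding E_gens_def by simp

lemma orbit_pairing_vanishes:
  assumes t: "1 \<le> t" "t \<le> r" and t': "1 \<le> t'" "t' \<le> r" and e: "1 \<le> e"
    and c: "(t = t' \<and> e \<le> int (P t) - 1) \<or> (t < t' \<and> e \<le> int (P t) - 1) \<or> (t' < t \<and> e \<le> int (P t'))"
  shows "B (gpow g e (v t)) (v t') = 0"
proof -
  consider "t = t'" "e \<le> int (P t) - 1" | "t < t'" "e \<le> int (P t) - 1" | "t' < t" "e \<le> int (P t')"
    using c by blast
  thus ?thesis
  proof cases
    case 1
    have "B (v t) (gpow g (- e) (v t)) = 0" using iso_hyp[OF t, of "- e"] 1 e by simp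
    thus ?thesis using 1 gpow_B_shift by simp
  next
    case 2 thus ?thesis using orth_hyp[of t t' e] t t' e by simp
  next
    case 3
    have "B (gpow g (- e) (v t')) (v t) = 0" using orth_hyp[of t' t "- e"] t t' e 3 by simp
    hence "B (v t) (gpow g (- e) (v t')) = 0" using B_reflexive by blast
    thus ?thesis using gpow_B_shift by simp
  qed
qed

lemma rank_inj: "inj_on rank blocks"
proof (rule inj_onI, clarify)
  fix t i t' i' assume a: "t \<in> {1..r}" "i < P t" "t' \<in> {1..r}" "i' < P t'"
    and e: "(P t - i) * (sig + 1) + t = (P t' - i') * (sig + 1) + t'"
  have "t < sig + 1" "t' < sig + 1" using a r by auto
  from mixed_radix_eq[OF this e] have "P t - i = P t' - i'" "t = t'" by blast+
  thus "t = t' \<and> i = i'" using a by (metis diff_diff_cancel less_imp_le_nat)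
qed

lemma pairing_diagonal:
  assumes "i \<in> blocks"
  shows "B (pos_gen i) (neg_gen i) \<noteq> 0"
proof -
  obtain t j where "i = (t, j)" by (cases i)
  hence i: "i = (t, j)" "1 \<le> t" "t \<le> r" "j < P t" using assms by auto
  have "B (pos_gen i) (neg_gen i) = B (gpow g (int (P t) - int j) (gpow g (int j) (v t))) (v t)"
    using i gpow_B_shift' by simp
  also have "\<dots> = B (gpow g (int (P t)) (v t)) (v t)" by (simp add: gpow_add[symmetric])
  finally show ?thesis using norm_hyp[OF i(2,3)] B_reflexive by auto
qed

lemma pairing_below_diagonal:
  assumes ij: "i \<in> blocks" "j \<in> blocks" "rank j < rank i"
  shows "B (pos_gen i) (neg_gen j) = 0"
proof -
  obtain t a t' b where "i = (t, a)" "j = (t', b)" by (cases i, cases j)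
  hence i: "i = (t, a)" "1 \<le> t" "t \<le> r" "a < P t"
    and j: "j = (t', b)" "1 \<le> t'" "t' \<le> r" "b < P t'" using ij by auto
  have lt: "P t' - b < P t - a \<or> (P t' - b = P t - a \<and> t' < t)"
    using mixed_radix_less[of t "sig + 1" "P t' - b" t' "P t - a"] ij i j r by simp
  define e where "e = int a + int (P t') - int b"
  have "B (pos_gen i) (neg_gen j) = B (gpow g (int (P t') - int b) (gpow g (int a) (v t))) (v t')"
    using i j gpow_B_shift' by simp
  also have "\<dots> = B (gpow g e (v t)) (v t')"
    unfolding e_def by (simp add: gpow_add[symmetric] algebra_simps)
  finally have eq: "B (pos_gen i) (neg_gen j) = B (gpow g e (v t)) (v t')" .
  have "t' < t \<Longrightarrow> P t \<le> P t'" "t < t' \<Longrightarrow> P t' \<le> P t" using P_antimono i j r by auto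
  hence "(t = t' \<and> e \<le> int (P t) - 1) \<or> (t < t' \<and> e \<le> int (P t) - 1) \<or> (t' < t \<and> e \<le> int (P t'))"
    using lt i j unfolding e_def by (cases "t = t'"; cases "t < t'") auto
  moreover have "1 \<le> e" using j unfolding e_def by simp
  ultimately show ?thesis using eq orbit_pairing_vanishes[OF i(2,3) j(2,3)] by simp
qed

lemma finite_blocks: "finite blocks"
  by simp

lemmas pairing_triangular = finite_blocks rank_inj pairing_diagonal pairing_below_diagonal

lemma W_ple_subspace: "subspace (W (ple p r))"
  using W_subspace ple_le_nn[of r] by simp

lemma W_ple_le_nn: "W (ple p r) \<subseteq> W nn"
  using W_le_nn ple_le_nn[of r] by simp

lemma W_inter_E_perp: "W (ple p r) \<inter> perp B (span (E_gens v r)) = {0}"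
proof -
  have "x = 0" if x: "x \<in> W (ple p r)" "x \<in> perp B (span (E_gens v r))" for x
  proof (rule triangular_pairing_left[OF pairing_triangular])
    show "x \<in> span (pos_gen ` blocks)" using x span_hyp pos_gens_eq by simp
    show "B x (neg_gen j) = 0" if "j \<in> blocks" for j
      using x(2) that span_superset[of "E_gens v r"] unfolding perp_def E_gens_def by blast
  qed
  moreover have "0 \<in> perp B (span (E_gens v r))" unfolding perp_def by simp
  ultimately show ?thesis using W_ple_subspace subspace_0 by blast
qed

lemma W_inter_E: "W (ple p r) \<inter> span (E_gens v r) = {0}"
proof -
  have "x = 0" if x: "x \<in> W (ple p r)" "x \<in> span (E_gens v r)" for x
  proof (rule triangular_pairing_right[OF pairing_triangular])
    show "x \<in> span (neg_gen ` blocks)" using x E_gens_eq by simp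
    show "B (pos_gen i) x = 0" if "i \<in> blocks" for i
    proof -
      have "pos_gen i \<in> W (ple p r)" using that span_hyp pos_gens_eq span_superset by blast
      thus ?thesis using W_nn_isotropic W_ple_le_nn x(1) by blast
    qed
  qed
  thus ?thesis using W_ple_subspace subspace_0 span_zero by blast
qed

(* E_r has dimension p_{\<le>r}: at most its number of generators, and at least that since
   W_{p_{\<le>r}} \<inter> E_r^\<perp> = 0 and E_r^\<perp> has codimension at most dim E_r. *)
lemma dim_E: "dim (span (E_gens v r)) = ple p r"
proof (rule antisym)
  have "dim (span (E_gens v r)) \<le> card (E_gens v r)"
    using dim_le_card[of "E_gens v r" "E_gens v r"] span_superset unfolding E_gens_def by simp
  also have "\<dots> \<le> card blocks" unfolding E_gens_eq by (rule card_image_le) simp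
  finally show "dim (span (E_gens v r)) \<le> ple p r" using card_parts[OF r] by simp
  let ?S = "{x + y |x y. x \<in> W (ple p r) \<and> y \<in> perp B (span (E_gens v r))}"
  have "dim ?S = dim (W (ple p r)) + dim (perp B (span (E_gens v r)))"
    by (rule dim_sum_disjoint[OF W_ple_subspace perp_subspace W_inter_E_perp])
  moreover have "dim ?S \<le> dimension" by (rule dim_subset_UNIV)
  moreover have "dimension \<le> dim (perp B (span (E_gens v r))) + dim (span (E_gens v r))"
    by (rule perp_dim)
  moreover have "dim (W (ple p r)) = ple p r" using W_dim ple_le_nn[of r] by simp
  ultimately show "ple p r \<le> dim (span (E_gens v r))" by linarith
qed

lemma direct_sum_E_perp: "direct_sum_UNIV (W (ple p r)) (perp B (span (E_gens v r)))"
proof (rule direct_sum_by_dim[OF W_ple_subspace perp_subspace W_inter_E_perp])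
  have "dimension \<le> dim (perp B (span (E_gens v r))) + dim (span (E_gens v r))" by (rule perp_dim)
  moreover have "dim (W (ple p r)) = ple p r" using W_dim ple_le_nn[of r] by simp
  ultimately show "dimension \<le> dim (W (ple p r)) + dim (perp B (span (E_gens v r)))"
    using dim_E by linarith
qed

lemma all_gens_eq: "all_gens v r = pos_gen ` blocks \<union> neg_gen ` blocks"
proof (rule equalityI)
  show "all_gens v r \<subseteq> pos_gen ` blocks \<union> neg_gen ` blocks"
  proof
    fix y assume "y \<in> all_gens v r"
    then obtain t i where ti: "t \<in> {1..r}" "i < 2 * P t" "y = gpow g (- int (P t) + int i) (v t)"
      unfolding all_gens_def by auto
    show "y \<in> pos_gen ` blocks \<union> neg_gen ` blocks"
    proof (cases "i < P t")
      case True
      hence "(t, i) \<in> blocks" "y = neg_gen (t, i)" using ti by auto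
      thus ?thesis by blast
    next
      case False
      hence "- int (P t) + int i = int (i - P t)" by simp
      hence "(t, i - P t) \<in> blocks" "y = pos_gen (t, i - P t)" using ti False by auto
      thus ?thesis by blast
    qed
  qed
  show "pos_gen ` blocks \<union> neg_gen ` blocks \<subseteq> all_gens v r"
  proof safe
    fix t j assume tj: "t \<in> {1..r}" "j < P t"
    have "- int (P t) + int (j + P t) = int j" by simp
    hence "gpow g (int j) (v t) = (\<lambda>(t, i). gpow g (- int (P t) + int i) (v t)) (t, j + P t)" by simp
    moreover have "(t, j + P t) \<in> (SIGMA t:{1..r}. {..<2 * P t})" using tj by simp
    ultimately show "gpow g (int j) (v t) \<in> all_gens v r" unfolding all_gens_def by blast
    show "gpow g (- int (P t) + int j) (v t) \<in> all_gens v r" using tj unfolding all_gens_def by auto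
  qed
qed

lemma span_all_gens: "span (all_gens v r) = {a + c |a c. a \<in> W (ple p r) \<and> c \<in> span (E_gens v r)}"
  unfolding all_gens_eq span_Un using span_hyp pos_gens_eq E_gens_eq by simp

lemma card_all_gens_le: "card (all_gens v r) \<le> 2 * ple p r"
  unfolding all_gens_def using card_image_le[of "SIGMA t:{1..r}. {..<2 * P t}"] card_double_parts[OF r]
  by simp

lemma dim_all_gens_le_card: "dim (all_gens v r) \<le> card (all_gens v r)"
  using dim_le_card[of "all_gens v r" "all_gens v r"] span_superset unfolding all_gens_def by simp

(* Property (iv): the 2 p_{\<le>r} vectors g^{-p_t+i} v_t span W_{p_{\<le>r}} \<oplus> E_r, which has
   dimension 2 p_{\<le>r}, so they are linearly independent and pairwise distinct. *)
lemma dim_all_gens: "dim (all_gens v r) = 2 * ple p r"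
proof -
  have "dim (span (all_gens v r)) = dim (W (ple p r)) + dim (span (E_gens v r))"
    unfolding span_all_gens by (rule dim_sum_disjoint[OF W_ple_subspace subspace_span W_inter_E])
  hence "2 * ple p r \<le> dim (all_gens v r)" using dim_E W_dim ple_le_nn[of r] by simp
  thus ?thesis using dim_all_gens_le_card card_all_gens_le by simp
qed

lemma card_all_gens: "card (all_gens v r) = 2 * ple p r"
  using dim_all_gens dim_all_gens_le_card card_all_gens_le by simp

lemma all_gens_independent:
  "indep_family scale (\<lambda>(t, i). gpow g (- int (P t) + int i) (v t)) (SIGMA t:{1..r}. {..<2 * P t})"
proof -
  have "inj_on (\<lambda>(t, i). gpow g (- int (P t) + int i) (v t)) (SIGMA t:{1..r}. {..<2 * P t})"
    by (rule eq_card_imp_inj_on) (use card_all_gens card_double_parts[OF r] in \<open>simp_all add: all_gens_def\<close>)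
  moreover have "independent (all_gens v r)"
    using card_eq_dim[of "all_gens v r" "all_gens v r"] card_all_gens dim_all_gens span_superset
    unfolding all_gens_def by simp
  ultimately show ?thesis unfolding indep_family_def all_gens_def by simp
qed

(* B is nondegenerate on the span of the g^{-p_t+i} v_t: both components of x = a + c
   (a \<in> W_{p_{\<le>r}}, c \<in> E_r) vanish by the two triangular pairing lemmas. *)
lemma all_gens_nondegenerate:
  assumes x: "x \<in> span (all_gens v r)" and orth: "\<And>y. y \<in> all_gens v r \<Longrightarrow> B x y = 0"
  shows "x = 0"
proof -
  obtain a c where ac: "x = a + c" "a \<in> W (ple p r)" "c \<in> span (E_gens v r)"
    using x span_all_gens by blast
  have c0: "c = 0"
  proof (rule triangular_pairing_right[OF pairing_triangular])
    show "c \<in> span (neg_gen ` blocks)" using ac E_gens_eq by simp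
    show "B (pos_gen i) c = 0" if "i \<in> blocks" for i
    proof -
      have fi: "pos_gen i \<in> W (ple p r)" using that span_hyp pos_gens_eq span_superset by blast
      have "B (pos_gen i) x = 0" using that all_gens_eq orth B_reflexive by blast
      moreover have "B (pos_gen i) a = 0" using W_nn_isotropic W_ple_le_nn fi ac(2) by blast
      ultimately show ?thesis using ac(1) by (simp add: B_add2)
    qed
  qed
  have "a = 0"
  proof (rule triangular_pairing_left[OF pairing_triangular])
    show "a \<in> span (pos_gen ` blocks)" using ac span_hyp pos_gens_eq by simp
    show "B a (neg_gen j) = 0" if "j \<in> blocks" for j
      using orth[of "neg_gen j"] that all_gens_eq ac(1) c0 by auto
  qed
  thus ?thesis using ac c0 by simp
qed

end

lemma admissible_intro:
  assumes r: "1 \<le> r" "r \<le> sig"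
    and flag: "\<And>i. i \<le> P r \<Longrightarrow> W (plt p r + i) = span (flag_gens v r \<union> orbit (v r) i)"
    and orth: "\<And>t t' e. 1 \<le> t' \<Longrightarrow> t' < t \<Longrightarrow> t \<le> r \<Longrightarrow> - int (P t') \<le> e
                 \<Longrightarrow> e \<le> int (P t') - 1 \<Longrightarrow> B (gpow g e (v t')) (v t) = 0"
    and iso: "\<And>t e. 1 \<le> t \<Longrightarrow> t \<le> r \<Longrightarrow> - int (P t) + 1 \<le> e \<Longrightarrow> e \<le> int (P t) - 1
                \<Longrightarrow> B (v t) (gpow g e (v t)) = 0"
    and norm: "\<And>t. 1 \<le> t \<Longrightarrow> t \<le> r \<Longrightarrow> B (v t) (gpow g (int (P t)) (v t)) = 1"
    and isotropic: "Q (v r) = 0"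
  shows "admissible r v"
proof -
  have span: "W (ple p r) = span (flag_gens v (Suc r))"
    using flag[of "P r"] flag_gens_Suc[of v r] r ple_plt[OF r] by simp
  show ?thesis unfolding admissible_def span_condition_i
  proof (intro conjI)
    show "\<forall>i\<le>P r. W (plt p r + i) = span (flag_gens v r \<union> orbit (v r) i)" using flag by simp
    show "\<forall>t\<in>{1..<r}. \<forall>i\<in>{- int (P t) .. int (P t) - 1}. B (gpow g i (v t)) (v r) = 0"
      using orth by auto
    show "\<forall>i\<in>{- int (P r) + 1 .. int (P r) - 1}. B (v r) (gpow g i (v r)) = 0"
      using iso r by auto
    show "B (v r) (gpow g (int (P r)) (v r)) = 1" using norm r by simp
    show "indep_family scale (\<lambda>(t, i). gpow g (- int (P t) + int i) (v t)) (SIGMA t:{1..r}. {..<2 * P t})"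
      by (rule all_gens_independent[OF r(2) span orth iso norm])
    show "direct_sum_UNIV (W (ple p r))
        (perp B (span ((\<lambda>(t, i). gpow g (- int (P t) + int i) (v t)) ` (SIGMA t:{1..r}. {..<P t}))))"
      using direct_sum_E_perp[OF r(2) span orth iso norm] unfolding E_gens_def .
  qed (rule isotropic)
qed

lemma admissible_cong:
  assumes r: "1 \<le> r" and eq: "\<And>t. 1 \<le> t \<Longrightarrow> t \<le> r \<Longrightarrow> v' t = v t"
  shows "admissible r v' = admissible r v"
proof -
  have eq_r: "v' r = v r" using eq r by simp
  have eq_on: "\<And>x. x \<in> (SIGMA t:{1..r}. A t) \<Longrightarrow>
      (\<lambda>(t, i). f t i (v' t)) x = (\<lambda>(t, i). f t i (v t)) x" for A f
    using eq by auto
  have flag: "(\<Union>t\<in>{1..<r}. span ((\<lambda>j. gpow g (int j) (v' t)) ` {..<P t})) =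
           (\<Union>t\<in>{1..<r}. span ((\<lambda>j. gpow g (int j) (v t)) ` {..<P t}))"
    by (rule SUP_cong) (auto simp: eq)
  have orth: "(\<forall>t\<in>{1..<r}. \<forall>i\<in>{- int (P t) .. int (P t) - 1}. B (gpow g i (v' t)) (v' r) = 0) =
      (\<forall>t\<in>{1..<r}. \<forall>i\<in>{- int (P t) .. int (P t) - 1}. B (gpow g i (v t)) (v r) = 0)"
    using eq eq_r by auto
  let ?F = "\<lambda>v. (\<lambda>(t, i). gpow g (- int (P t) + int i) (v t))"
  have indep: "indep_family scale (?F v') (SIGMA t:{1..r}. {..<2 * P t}) =
      indep_family scale (?F v) (SIGMA t:{1..r}. {..<2 * P t})"
  proof -
    have "inj_on (?F v') (SIGMA t:{1..r}. {..<2 * P t}) = inj_on (?F v) (SIGMA t:{1..r}. {..<2 * P t})"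
      by (rule inj_on_cong) (rule eq_on)
    moreover have "?F v' ` (SIGMA t:{1..r}. {..<2 * P t}) = ?F v ` (SIGMA t:{1..r}. {..<2 * P t})"
      by (rule image_cong[OF refl eq_on])
    ultimately show ?thesis unfolding indep_family_def by simp
  qed
  have E: "?F v' ` (SIGMA t:{1..r}. {..<P t}) = ?F v ` (SIGMA t:{1..r}. {..<P t})"
    by (rule image_cong[OF refl eq_on])
  show ?thesis unfolding admissible_def flag indep E unfolding orth unfolding eq_r by (rule refl)
qed

lemma admissible_extend:
  assumes r: "1 \<le> r" "r \<le> sig" and prev: "\<forall>r'\<in>{1..<r}. admissible r' v"
    and x: "x \<in> W (plt p r + 1)" "x \<notin> W (plt p r)"
    and x_orth: "\<forall>t\<in>{1..<r}. \<forall>i\<in>{- int (P t) .. int (P t) - 1}. B (gpow g i (v t)) x = 0"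
    and x_norm: "B x (gpow g (int (P r)) x) = 1"
  shows "\<forall>r'\<in>{1..r}. admissible r' (v(r := x))"
proof -
  let ?v = "v(r := x)"
  have prev': "\<forall>r'\<in>{1..<r}. admissible r' ?v"
  proof
    fix r' assume r': "r' \<in> {1..<r}"
    hence "admissible r' ?v = admissible r' v" by (intro admissible_cong) auto
    thus "admissible r' ?v" using prev r' by simp
  qed
  have x_orth': "\<forall>t\<in>{1..<r}. \<forall>i\<in>{- int (P t) .. int (P t) - 1}. B (gpow g i (?v t)) x = 0"
    using x_orth by auto
  have "admissible r ?v"
  proof (rule admissible_intro[OF r])
    show "W (plt p r + i) = span (flag_gens ?v r \<union> orbit (?v r) i)" if "i \<le> P r" for i
      using W_block_span[OF r prev' x x_orth' that] unfolding fun_upd_same .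
    show "B (gpow g e (?v t')) (?v t) = 0"
      if "1 \<le> t'" "t' < t" "t \<le> r" "- int (P t') \<le> e" "e \<le> int (P t') - 1" for t t' e
      using that x_orth' prev_orth[OF r prev', of t' t e] by (cases "t = r") auto
    show "B (?v t) (gpow g e (?v t)) = 0"
      if "1 \<le> t" "t \<le> r" "- int (P t) + 1 \<le> e" "e \<le> int (P t) - 1" for t e
      using that candidate_orbit_isotropic[OF r prev' x x_orth'] prev_orbit_isotropic[OF r prev', of t e]
      by (cases "t = r") auto
    show "B (?v t) (gpow g (int (P t)) (?v t)) = 1" if "1 \<le> t" "t \<le> r" for t
      using that x_norm prev_normalised[OF r prev', of t] by (cases "t = r") auto
    show "Q (?v r) = 0" using W_isotropic[of "plt p r + 1" x] x(1) block_le_nn[OF r prev'] P_pos[OF r]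
      by simp
  qed
  thus ?thesis using prev' by (auto simp: le_less)
qed

lemma admissible_exists: "r \<le> sig \<Longrightarrow> \<exists>v. \<forall>r'\<in>{1..r}. admissible r' v"
proof (induction r)
  case 0 thus ?case by simp
next
  case (Suc r)
  then obtain v where "\<forall>r'\<in>{1..r}. admissible r' v" by auto
  hence "\<forall>r'\<in>{1..<Suc r}. admissible r' v" by (simp add: atLeastLessThanSuc_atLeastAtMost)
  moreover obtain x where "x \<in> W (plt p (Suc r) + 1)" "x \<notin> W (plt p (Suc r))"
      "\<forall>t\<in>{1..<Suc r}. \<forall>i\<in>{- int (P t) .. int (P t) - 1}. B (gpow g i (v t)) x = 0"
      "B x (gpow g (int (P (Suc r))) x) = 1"
    using exists_normalised_candidate[of "Suc r" v] Suc.prems calculation by auto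
  ultimately have "\<forall>r'\<in>{1..Suc r}. admissible r' (v(Suc r := x))"
    using admissible_extend[of "Suc r" v x] Suc.prems by simp
  thus ?case by blast
qed

(* Uniqueness up to sign, by induction on r: v' r - m v r lies in W_s \<inter> E_{r-1}^\<perp> = 0,
   and the normalisation (iii) forces m^2 = 1. *)
lemma admissible_unique:
  assumes v: "\<forall>r\<in>{1..sig}. admissible r v" and v': "\<forall>r\<in>{1..sig}. admissible r v'"
  shows "k \<in> {1..sig} \<Longrightarrow> v' k = v k \<or> v' k = - v k"
proof (induction k rule: less_induct)
  case (less r)
  have r: "1 \<le> r" "r \<le> sig" using less.prems by auto
  have prev: "\<forall>r'\<in>{1..<r}. admissible r' v" using v r by auto
  have adm: "admissible r v" and adm': "admissible r v'" using v v' r by auto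
  have IH: "\<And>t. 1 \<le> t \<Longrightarrow> t < r \<Longrightarrow> v' t = v t \<or> v' t = - v t" using less.IH r by auto
  have pr: "1 \<le> P r" using P_pos r by simp
  have "v' r \<in> W (plt p r + 1)" using admissible_flag[OF adm' pr] orbit_1 by (simp add: span_base)
  moreover have "W (plt p r + 1) = span (insert (v r) (flag_gens v r))"
    using admissible_flag[OF adm pr] orbit_1 by simp
  ultimately obtain m where m: "v' r - m *s v r \<in> span (flag_gens v r)"
    using span_breakdown_eq by blast
  define a where "a = v' r - m *s v r"
  have aW: "a \<in> W (plt p r)" using m W_block_start[OF r prev] unfolding a_def by simp
  have "a \<in> perp B (E_gens v (r - 1))"
    unfolding perp_def
  proof safe
    fix y assume "y \<in> E_gens v (r - 1)"
    then obtain t i where ti: "1 \<le> t" "t < r" "i < P t" "y = gpow g (- int (P t) + int i) (v t)"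
      unfolding E_gens_def by auto
    have "B y (v r) = 0" using admissible_orth[OF adm] ti by auto
    moreover have "B (gpow g (- int (P t) + int i) (v' t)) (v' r) = 0"
      using admissible_orth[OF adm'] ti by auto
    hence "B y (v' r) = 0" using IH[OF ti(1,2)] ti(4) by (auto simp: gpow_neg B_neg1)
    ultimately have "B (v r) y = 0" "B (v' r) y = 0" using B_reflexive by blast+
    thus "B a y = 0" unfolding a_def by (simp add: B_diff1 B_scale1)
  qed
  hence "a = 0" using aW prev_direct_sum[OF r prev] unfolding direct_sum_UNIV_def perp_span by blast
  hence vr: "v' r = m *s v r" unfolding a_def by simp
  have "1 = B (v' r) (gpow g (int (P r)) (v' r))" by (rule admissible_norm[OF adm', symmetric])
  also have "\<dots> = m * m * B (v r) (gpow g (int (P r)) (v r))"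
    unfolding vr by (simp add: gpow_scale B_scale1 B_scale2)
  also have "B (v r) (gpow g (int (P r)) (v r)) = 1" by (rule admissible_norm[OF adm])
  finally have "m = 1 \<or> m = - 1" using square_eq_square_iff[of m 1] by simp
  thus ?case using vr by auto
qed

lemma Q_zero: "Q 0 = 0"
proof -
  consider "Q = (\<lambda>_. 0)" | "\<forall>c x. Q (c *s x) = c * c * Q x"
    using form unfolding form_setting_def by blast
  thus ?thesis
  proof cases
    case 2 thus ?thesis using spec[OF spec[OF 2, of 0], of 0] by simp
  qed simp
qed

lemma full_family_image: "full_family g p v ` full_index p = all_gens v sig"
proof (rule equalityI)
  show "full_family g p v ` full_index p \<subseteq> all_gens v sig"
  proof
    fix y assume "y \<in> full_family g p v ` full_index p"
    then obtain t j where tj: "t \<in> {1..sig}" "- int (P t) \<le> j" "j \<le> int (P t) - 1"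
        "y = gpow g j (v t)"
      unfolding full_index_def full_family_def part_size_def by auto
    have "- int (P t) + int (nat (j + int (P t))) = j" using tj by simp
    hence "y = (\<lambda>(t, i). gpow g (- int (P t) + int i) (v t)) (t, nat (j + int (P t)))"
      by (simp only: tj(4) prod.case)
    moreover have "(t, nat (j + int (P t))) \<in> (SIGMA t:{1..sig}. {..<2 * P t})" using tj by auto
    ultimately show "y \<in> all_gens v sig" unfolding all_gens_def by blast
  qed
  show "all_gens v sig \<subseteq> full_family g p v ` full_index p"
  proof
    fix y assume "y \<in> all_gens v sig"
    then obtain t i where ti: "t \<in> {1..sig}" "i < 2 * P t" "y = gpow g (- int (P t) + int i) (v t)"
      unfolding all_gens_def by auto
    hence "(t, - int (P t) + int i) \<in> full_index p" unfolding full_index_def part_size_def by auto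
    moreover have "y = full_family g p v (t, - int (P t) + int i)" using ti unfolding full_family_def by simp
    ultimately show "y \<in> full_family g p v ` full_index p" by blast
  qed
qed

lemma card_full_index: "card (full_index p) = 2 * nn"
proof -
  have "card (full_index p) = (\<Sum>t\<in>{1..sig}. card {- int (p ! (t - 1)) .. int (p ! (t - 1)) - 1})"
    unfolding full_index_def by (simp add: card_SigmaI)
  also have "\<dots> = (\<Sum>t\<in>{1..sig}. 2 * P t)" unfolding part_size_def by (intro sum.cong) auto
  also have "\<dots> = 2 * ple p sig" using sum_part_size[of sig p] by (simp add: sum_distrib_left[symmetric])
  finally show ?thesis using ple_sig by simp
qed

context
  fixes v :: "nat \<Rightarrow> 'v"
  assumes v: "\<forall>r\<in>{1..sig}. admissible r v"
begin

lemma complete_admissible: "1 \<le> t \<Longrightarrow> t \<le> sig \<Longrightarrow> admissible t v"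
  using v atLeastAtMost_iff by blast

lemma complete_span: "W (ple p sig) = span (flag_gens v (Suc sig))"
proof -
  have "W (plt p sig + P sig) = span (flag_gens v sig \<union> orbit (v sig) (P sig))"
    by (rule admissible_flag[OF complete_admissible[OF sig_pos order_refl] order_refl])
  moreover have "ple p sig = plt p sig + P sig" using ple_plt[OF sig_pos] by simp
  moreover have "flag_gens v (Suc sig) = flag_gens v sig \<union> orbit (v sig) (P sig)"
    using flag_gens_Suc[of v sig] sig_pos by (cases p) auto
  ultimately show ?thesis by simp
qed

lemma complete_orth:
  "1 \<le> t' \<Longrightarrow> t' < t \<Longrightarrow> t \<le> sig \<Longrightarrow> - int (P t') \<le> e \<Longrightarrow> e \<le> int (P t') - 1
   \<Longrightarrow> B (gpow g e (v t')) (v t) = 0"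
  by (rule admissible_orth[OF complete_admissible]) auto

lemma complete_iso:
  "1 \<le> t \<Longrightarrow> t \<le> sig \<Longrightarrow> - int (P t) + 1 \<le> e \<Longrightarrow> e \<le> int (P t) - 1
   \<Longrightarrow> B (v t) (gpow g e (v t)) = 0"
  by (rule admissible_iso[OF complete_admissible]) auto

lemma complete_norm: "1 \<le> t \<Longrightarrow> t \<le> sig \<Longrightarrow> B (v t) (gpow g (int (P t)) (v t)) = 1"
  by (rule admissible_norm[OF complete_admissible])

lemmas complete_hyps = order_refl complete_span complete_orth complete_iso complete_norm

lemma dim_all_complete: "dim (all_gens v sig) = 2 * nn"
  using dim_all_gens[OF complete_hyps] ple_sig by simp

lemma all_complete_independent: "independent (all_gens v sig)"
  using all_gens_independent[OF complete_hyps] unfolding indep_family_def all_gens_def by simp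

lemma full_family_inj: "inj_on (full_family g p v) (full_index p)"
proof (rule eq_card_imp_inj_on)
  show "finite (full_index p)" unfolding full_index_def by simp
  show "card (full_family g p v ` full_index p) = card (full_index p)"
    using full_family_image card_all_gens[OF complete_hyps] ple_sig card_full_index by simp
qed

lemma basis_even: "even N \<Longrightarrow> basis_family scale (full_family g p v) (full_index p)"
proof -
  assume "even N"
  hence "dim (all_gens v sig) = dimension" using dim_all_complete dimension_N by simp
  hence "span (all_gens v sig) = UNIV" using dim_eq_full by simp
  thus ?thesis unfolding basis_family_def indep_family_def
    using full_family_inj all_complete_independent full_family_image by simp
qed

abbreviation "F_perp \<equiv> perp B (span (all_gens v sig))"

(* The span F of the 2n vectors is nondegenerate, so V = F \<oplus> F^\<perp>. *)
lemma F_inter_F_perp: "span (all_gens v sig) \<inter> F_perp = {0}"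
proof -
  have "x = 0" if "x \<in> span (all_gens v sig)" "x \<in> F_perp" for x
    using all_gens_nondegenerate[OF complete_hyps that(1)] that(2) span_superset
    unfolding perp_def by blast
  moreover have "0 \<in> F_perp" unfolding perp_def by simp
  ultimately show ?thesis using span_zero by blast
qed

lemma F_direct_sum: "direct_sum_UNIV (span (all_gens v sig)) F_perp"
  using direct_sum_by_dim[OF subspace_span perp_subspace F_inter_F_perp] perp_dim[of "span (all_gens v sig)"]
  by simp

lemma dim_F_perp: "odd N \<Longrightarrow> dim F_perp = 1"
proof -
  assume "odd N"
  hence N: "dimension = 2 * nn + 1" using dimension_N by presburger
  have "dim {x + y |x y. x \<in> span (all_gens v sig) \<and> y \<in> F_perp} =
      dim (span (all_gens v sig)) + dim F_perp"
    by (rule dim_sum_disjoint[OF subspace_span perp_subspace F_inter_F_perp])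
  moreover have "dim {x + y |x y. x \<in> span (all_gens v sig) \<and> y \<in> F_perp} \<le> dimension"
    by (rule dim_subset_UNIV)
  moreover have "dimension \<le> dim F_perp + dim (span (all_gens v sig))" by (rule perp_dim)
  ultimately show ?thesis using N dim_all_complete by simp
qed

lemma F_perp_line:
  assumes "odd N" "u \<in> F_perp" "u \<noteq> 0"
  shows "F_perp = span {u}"
proof -
  have "span {u} \<subseteq> F_perp" using assms(2) perp_subspace by (simp add: span_minimal)
  moreover have "dim F_perp \<le> dim (span {u})" using dim_F_perp[OF assms(1)] assms(3) by (simp add: dim_insert)
  ultimately show ?thesis using subspace_dim_equal[OF subspace_span perp_subspace] by blast
qed

lemma F_perp_nonzero: "odd N \<Longrightarrow> \<exists>u\<in>F_perp. u \<noteq> 0"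
proof (rule ccontr)
  assume odd: "odd N" and "\<not> (\<exists>u\<in>F_perp. u \<noteq> 0)"
  hence "F_perp \<subseteq> {0}" by blast
  hence "dim F_perp = 0" by (simp only: dim_eq_0)
  thus False using dim_F_perp[OF odd] by linarith
qed

lemma F_perp_radical:
  assumes "odd N" "u \<in> F_perp" "B u u = 0"
  shows "u \<in> perp B UNIV"
  unfolding perp_def
proof safe
  fix y :: 'v
  show "B u y = 0"
  proof (cases "u = 0")
    case False
    obtain e w where ew: "e \<in> span (all_gens v sig)" "w \<in> F_perp" "y = e + w"
      using F_direct_sum unfolding direct_sum_UNIV_def by blast
    obtain c where "w = c *s u" using ew(2) F_perp_line[OF assms(1,2) False] span_singleton by auto
    moreover have "B u e = 0" using assms(2) ew(1) unfolding perp_def by blast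
    ultimately show ?thesis using ew(3) assms(3) by (simp add: B_add2 B_scale2)
  qed simp
qed

(* Hence for odd N the form is of type (ii) (a nondegenerate alternating form lives in even
   dimension), and Q does not vanish on F_perp - {0}. *)
lemma odd_quadratic_case:
  assumes "odd N"
  shows "(\<forall>c x. Q (c *s x) = c * c * Q x) \<and> (\<forall>x y. B x y = Q (x + y) - Q x - Q y) \<and> inj_on Q (perp B UNIV)"
proof -
  obtain u where u: "u \<in> F_perp" "u \<noteq> 0" using F_perp_nonzero[OF assms] by blast
  have "\<not> ((\<forall>x. B x x = 0) \<and> perp B UNIV = {0})"
    using F_perp_radical[OF assms u(1)] u(2) by blast
  thus ?thesis using form unfolding form_setting_def by blast
qed

lemma Q_nonzero_F_perp:
  assumes odd: "odd N" and u: "u \<in> F_perp" "u \<noteq> 0"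
  shows "Q u \<noteq> 0"
proof
  assume Qu: "Q u = 0"
  note quad = odd_quadratic_case[OF odd]
  have "u + u = 2 *s u" by (metis one_add_one scale_left_distrib scale_one)
  hence "B u u = 0" using quad Qu by simp
  hence "u \<in> perp B UNIV" by (rule F_perp_radical[OF odd u(1)])
  moreover have "0 \<in> perp B UNIV" unfolding perp_def by simp
  moreover have "Q u = Q 0" using Qu Q_zero by simp
  ultimately have "u = 0" using quad unfolding inj_on_def by blast
  thus False using u(2) by simp
qed

lemma props_last_iff: "props_last B Q g p v u \<longleftrightarrow> u \<in> F_perp \<and> Q u = 1"
proof -
  have "(\<forall>t\<in>{1..length p}. \<forall>i\<in>{- int (p ! (t - 1)) .. int (p ! (t - 1)) - 1}. B (gpow g i (v t)) u = 0)
      \<longleftrightarrow> (\<forall>y\<in>full_family g p v ` full_index p. B y u = 0)"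
    unfolding full_family_def full_index_def by auto
  also have "\<dots> \<longleftrightarrow> u \<in> F_perp"
    unfolding full_family_image perp_span unfolding perp_def using B_reflexive by blast
  finally show ?thesis unfolding props_last_def by blast
qed

lemma last_vector_exists: "odd N \<Longrightarrow> \<exists>u. props_last B Q g p v u"
proof -
  assume odd: "odd N"
  obtain u where u: "u \<in> F_perp" "u \<noteq> 0" using F_perp_nonzero[OF odd] by blast
  obtain m where m: "m * m * Q u = 1"
    using alg_closed_inverse_square[OF alg_closed Q_nonzero_F_perp[OF odd u]] by blast
  have "m *s u \<in> F_perp" using u(1) perp_subspace by (simp add: subspace_scale)
  moreover have "Q (m *s u) = 1" using odd_quadratic_case[OF odd] m by simp
  ultimately show ?thesis using props_last_iff by blast
qed

lemma last_vector_unique: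
  assumes odd: "odd N" and u: "props_last B Q g p v u" and u': "props_last B Q g p v u'"
  shows "u' = u \<or> u' = - u"
proof -
  have uP: "u \<in> F_perp" "Q u = 1" and u'P: "u' \<in> F_perp" "Q u' = 1" using u u' props_last_iff by auto
  hence "u \<noteq> 0" using Q_zero by auto
  then obtain c where c: "u' = c *s u" using u'P(1) F_perp_line[OF odd uP(1)] span_singleton by auto
  hence "c * c = 1 * 1" using uP u'P odd_quadratic_case[OF odd] by simp
  thus ?thesis using c square_eq_square_iff[of c 1] by auto
qed

lemma basis_odd:
  assumes odd: "odd N" and u: "props_last B Q g p v u"
  shows "basis_family scale (\<lambda>x. case x of None \<Rightarrow> u | Some y \<Rightarrow> full_family g p v y)
           (insert None (Some ` full_index p))"
proof -
  let ?f = "\<lambda>x. case x of None \<Rightarrow> u | Some y \<Rightarrow> full_family g p v y"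
  have uP: "u \<in> F_perp" "u \<noteq> 0" using u props_last_iff Q_zero by auto
  have u_notin: "u \<notin> span (all_gens v sig)" using F_inter_F_perp uP by blast
  have img: "?f ` insert None (Some ` full_index p) = insert u (all_gens v sig)"
    using full_family_image by (auto simp: image_image)
  have "inj_on ?f (Some ` full_index p)"
    by (rule inj_on_imageI) (simp add: o_def full_family_inj)
  moreover have "?f None \<notin> ?f ` (Some ` full_index p)"
    using u_notin full_family_image span_superset by (auto simp: image_image)
  ultimately have "inj_on ?f (insert None (Some ` full_index p))" by simp
  moreover have "independent (insert u (all_gens v sig))"
    using independent_insert u_notin all_complete_independent by simp
  moreover have "span (insert u (all_gens v sig)) = UNIV"
  proof -
    have "y \<in> span (insert u (all_gens v sig))" for y
    proof -
      obtain e w where ew: "e \<in> span (all_gens v sig)" "w \<in> F_perp" "y = e + w"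
        using F_direct_sum unfolding direct_sum_UNIV_def by blast
      have "w \<in> span {u}" using ew(2) F_perp_line[OF odd uP] by simp
      hence "w \<in> span (insert u (all_gens v sig))" using span_mono[of "{u}"] by blast
      moreover have "e \<in> span (insert u (all_gens v sig))" using ew(1) span_mono[of "all_gens v sig"] by blast
      ultimately show ?thesis using ew(3) by (simp add: span_add)
    qed
    thus ?thesis by blast
  qed
  ultimately show ?thesis unfolding basis_family_def indep_family_def img by simp
qed

end

end

lemma isoflag_mono:
  assumes flag: "isoflag scale B Q N V" and ij: "i \<le> j" "j \<le> N"
  shows "V i \<subseteq> V j"
  using ij
proof (induction j)
  case (Suc j)
  have "V j \<subseteq> V (Suc j)" using flag Suc.prems unfolding isoflag_def by fastforce
  thus ?case using Suc by (cases "i = Suc j") auto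
qed simp

lemma relative_position_setting_intro:
  fixes scale :: "'a::field \<Rightarrow> 'v::ab_group_add \<Rightarrow> 'v"
  assumes fd: "finite_dimensional_vector_space scale Basis"
    and k: "alg_closed TYPE('a)"
    and dimV: "vector_space.dim scale (UNIV :: 'v set) = N"
    and N3: "3 \<le> N"
    and form: "form_setting scale B Q"
    and part: "partition_of p (N div 2)"
    and flagW: "isoflag scale B Q N W"
    and flagW': "isoflag scale B Q N W'"
    and relpos: "\<forall>i\<in>{1..N}. relpos N W W' i = wperm p N i"
    and iso: "isometry scale B Q g"
    and gW: "\<forall>i\<le>N. g ` (W i) = W' i"
  shows "relative_position_setting scale Basis B g N W W' Q (p :: nat list)"
proof -
  interpret finite_dimensional_vector_space scale Basis by (rule fd)
  show ?thesis
  proof unfold_locales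
    show "bilinear_form scale B" using form unfolding form_setting_def by blast
    show "g (x + y) = g x + g y" "g (scale c x) = scale c (g x)" for x y c
      using iso unfolding isometry_def Vector_Spaces.linear_iff by blast+
    show "bij g" "B (g x) (g y) = B x y" for x y
      using iso unfolding isometry_def by blast+
    show "subspace (W i)" "dim (W i) = i" "subspace (W' i)" "dim (W' i) = i" if "i \<le> N" for i
      using flagW flagW' that unfolding isoflag_def by blast+
    show "W i \<subseteq> W j" "W' i \<subseteq> W' j" if "i \<le> j" "j \<le> N" for i j
      using isoflag_mono[OF flagW that] isoflag_mono[OF flagW' that] by blast+
    show "W 0 = {0}" "W N = UNIV" using flagW unfolding isoflag_def by blast+
    show "perp B (W i) = W (N - i)" "x \<in> W i \<Longrightarrow> Q x = 0" if "i \<le> N div 2" for i x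
      using flagW that unfolding isoflag_def by blast+
    show "dimension = N" using dimV dim_UNIV dimension_def by simp
    show "relpos N W W' i = wperm p N i" if "1 \<le> i" "i \<le> N" for i using relpos that by simp
    show "g ` W i = W' i" if "i \<le> N" for i using gW that by simp
  qed (use k form N3 part in simp_all)
qed

theorem proposition3p3:
  fixes scale :: "'a::field \<Rightarrow> 'v::ab_group_add \<Rightarrow> 'v"
    and B :: "'v \<Rightarrow> 'v \<Rightarrow> 'a" and Q :: "'v \<Rightarrow> 'a"
    and N :: nat and p :: "nat list"
    and W W' :: "nat \<Rightarrow> 'v set" and g :: "'v \<Rightarrow> 'v"
  assumes k: "alg_closed TYPE('a)"
    and vs: "vector_space scale"
    and fin: "\<exists>S. finite S \<and> module.span scale S = UNIV"
    and dimV: "vector_space.dim scale (UNIV :: 'v set) = N"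
    and N3: "3 \<le> N"
    and form: "form_setting scale B Q"
    and part: "partition_of p (N div 2)"
    and flagW: "isoflag scale B Q N W"
    and flagW': "isoflag scale B Q N W'"
    and relpos: "\<forall>i\<in>{1..N}. relpos N W W' i = wperm p N i"
    and iso: "isometry scale B Q g"
    and gW: "\<forall>i\<le>N. g ` (W i) = W' i"
  shows "\<exists>v. props_i_v scale B Q g W p v \<and>
           (\<forall>v'. props_i_v scale B Q g W p v' \<longrightarrow>
              (\<forall>k\<in>{1..length p}. v' k = v k \<or> v' k = - v k)) \<and>
           (even N \<longrightarrow> basis_family scale (full_family g p v) (full_index p)) \<and>
           (odd N \<longrightarrow> (\<exists>u. props_last B Q g p v u \<and>
              (\<forall>u'. props_last B Q g p v u' \<longrightarrow> u' = u \<or> u' = - u) \<and>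
              basis_family scale (\<lambda>x. case x of None \<Rightarrow> u | Some y \<Rightarrow> full_family g p v y)
                 (insert None (Some ` full_index p))))"
proof -
  interpret vector_space scale by (rule vs)
  obtain S where "finite S" "span S = UNIV" using fin by blast
  then obtain Basis where fd: "finite_dimensional_vector_space scale Basis"
    by (rule finite_basis_from_span)
  interpret relative_position_setting scale Basis B g N W W' Q p
    by (rule relative_position_setting_intro[OF fd k dimV N3 form part flagW flagW' relpos iso gW])
  obtain v where v: "\<forall>r\<in>{1..length p}. admissible r v"
    using admissible_exists[of "length p"] by auto
  have "props_i_v scale B Q g W p v"
    using v props_i_v_iff by simp
  moreover have "\<forall>v'. props_i_v scale B Q g W p v' \<longrightarrow> (\<forall>k\<in>{1..length p}. v' k = v k \<or> v' k = - v k)"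
    using admissible_unique[OF v] props_i_v_iff by blast
  moreover have "even N \<longrightarrow> basis_family scale (full_family g p v) (full_index p)"
    using basis_even[OF v] by blast
  moreover have "odd N \<longrightarrow> (\<exists>u. props_last B Q g p v u \<and>
      (\<forall>u'. props_last B Q g p v u' \<longrightarrow> u' = u \<or> u' = - u) \<and>
      basis_family scale (\<lambda>x. case x of None \<Rightarrow> u | Some y \<Rightarrow> full_family g p v y)
        (insert None (Some ` full_index p)))"
    using last_vector_exists[OF v] last_vector_unique[OF v] basis_odd[OF v] by blast
  ultimately show ?thesis by blast
qed

end
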